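(* Let $1<p,q<\infty$, $r>1$, and $X=\bigoplus_{\ell_p}\ell_q^n$. Let $F:X\to\mathbb{R}$ be uniformly $H^r$-smooth. For each $n$ let $F_n=F\circ i_n\circ\pi_n:\ell_q\to\mathbb{R}$. Then there is a subsequence $(F_{n_j})_j$ of $(F_n)_n$ which converges pointwise on $\ell_q$ to a uniformly $H^r$-smooth function $F^*:\ell_q\to\mathbb{R}$.
   Context: $\bigoplus_{\ell_p}\ell_q^n$ is the space of sequences $x=(x_n)_{n\ge1}$ with $x_n\in\ell_q^n$ and $\|x\|=(\sum_n\|x_n\|_q^p)^{1/p}<\infty$. $\pi_n:\ell_q\to\ell_q^n$ is the projection onto the first $n$ coordinates, and $i_n:\ell_q^n\to X$ is the isometric inclusion of $\ell_q^n$ as the $n$-th summand of $X$. For real $s>1$, with $k$ the largest integer strictly less than $s$, $g$ is uniformly $H^s$-smooth if it is $C^k$ and there is $M>0$ with $\|g^{(k)}(y)-g^{(k)}(z)\|\le M\|y-z\|^{s-k}$ for all $y,z$. *)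

theory Defs
  imports "HOL-Analysis.Analysis"
begin

(* Vectors are real-valued functions on an index type 'i, with pointwise operations.
   A normed space is given by a carrier V :: ('i => real) set (a linear subspace)
   and a norm N on it. *)

definition vadd :: "('i \<Rightarrow> real) \<Rightarrow> ('i \<Rightarrow> real) \<Rightarrow> ('i \<Rightarrow> real)" where
  "vadd x y = (\<lambda>i. x i + y i)"

definition vdiff :: "('i \<Rightarrow> real) \<Rightarrow> ('i \<Rightarrow> real) \<Rightarrow> ('i \<Rightarrow> real)" where
  "vdiff x y = (\<lambda>i. x i - y i)"

definition vscale :: "real \<Rightarrow> ('i \<Rightarrow> real) \<Rightarrow> ('i \<Rightarrow> real)" where
  "vscale a x = (\<lambda>i. a * x i)"

(* T :: ('i => real) list => real, viewed as a j-linear form in its j list arguments *)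
definition multilinear_on ::
  "('i \<Rightarrow> real) set \<Rightarrow> nat \<Rightarrow> (('i \<Rightarrow> real) list \<Rightarrow> real) \<Rightarrow> bool" where
  "multilinear_on V j T \<longleftrightarrow>
     (\<forall>as bs x y a b. length as + length bs + 1 = j \<and> set as \<subseteq> V \<and> set bs \<subseteq> V
        \<and> x \<in> V \<and> y \<in> V \<longrightarrow>
        T (as @ vadd (vscale a x) (vscale b y) # bs) = a * T (as @ x # bs) + b * T (as @ y # bs))"

definition bounded_multilinear_on ::
  "('i \<Rightarrow> real) set \<Rightarrow> (('i \<Rightarrow> real) \<Rightarrow> real) \<Rightarrow> nat \<Rightarrow> (('i \<Rightarrow> real) list \<Rightarrow> real) \<Rightarrow> bool" where
  "bounded_multilinear_on V N j T \<longleftrightarrow> multilinear_on V j T \<and>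
     (\<exists>C. \<forall>hs. length hs = j \<and> set hs \<subseteq> V \<longrightarrow> \<bar>T hs\<bar> \<le> C * prod_list (map N hs))"

definition mnorm ::
  "('i \<Rightarrow> real) set \<Rightarrow> (('i \<Rightarrow> real) \<Rightarrow> real) \<Rightarrow> nat \<Rightarrow> (('i \<Rightarrow> real) list \<Rightarrow> real) \<Rightarrow> real" where
  "mnorm V N j T = Sup {\<bar>T hs\<bar> | hs. length hs = j \<and> set hs \<subseteq> V \<and> (\<forall>h\<in>set hs. N h \<le> 1)}"

(* Frechet derivative of y \<mapsto> D y (a j-linear form) at y is h \<mapsto> (hs \<mapsto> D' (h # hs)),
   measured in the operator norm of j-linear forms *)
definition has_mderiv_at ::
  "('i \<Rightarrow> real) set \<Rightarrow> (('i \<Rightarrow> real) \<Rightarrow> real) \<Rightarrow> nat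
   \<Rightarrow> (('i \<Rightarrow> real) \<Rightarrow> ('i \<Rightarrow> real) list \<Rightarrow> real) \<Rightarrow> (('i \<Rightarrow> real) list \<Rightarrow> real)
   \<Rightarrow> ('i \<Rightarrow> real) \<Rightarrow> bool" where
  "has_mderiv_at V N j D D' y \<longleftrightarrow>
     (\<forall>\<epsilon>>0. \<exists>\<delta>>0. \<forall>h\<in>V. N h < \<delta> \<longrightarrow>
        mnorm V N j (\<lambda>hs. D (vadd y h) hs - D y hs - D' (h # hs)) \<le> \<epsilon> * N h)"

(* uniformly H^s-smooth: C^k with k the largest integer < s, k-th derivative (s-k)-Hoelder *)
definition uniformly_H_smooth ::
  "('i \<Rightarrow> real) set \<Rightarrow> (('i \<Rightarrow> real) \<Rightarrow> real) \<Rightarrow> real \<Rightarrow> (('i \<Rightarrow> real) \<Rightarrow> real) \<Rightarrow> bool" where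
  "uniformly_H_smooth V N s f \<longleftrightarrow>
     (let k = nat (\<lceil>s\<rceil> - 1) in
      \<exists>(D :: nat \<Rightarrow> ('i \<Rightarrow> real) \<Rightarrow> ('i \<Rightarrow> real) list \<Rightarrow> real) M.
        M > 0
      \<and> (\<forall>y\<in>V. D 0 y [] = f y)
      \<and> (\<forall>j\<le>k. \<forall>y\<in>V. bounded_multilinear_on V N j (D j y))
      \<and> (\<forall>j<k. \<forall>y\<in>V. has_mderiv_at V N j (D j) (D (Suc j) y) y)
      \<and> (\<forall>y\<in>V. \<forall>z\<in>V. mnorm V N k (\<lambda>hs. D k y hs - D k z hs) \<le> M * N (vdiff y z) powr (s - real k)))"

definition lq :: "real \<Rightarrow> (nat \<Rightarrow> real) set" where
  "lq q = {x. summable (\<lambda>i. \<bar>x i\<bar> powr q)}"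

definition lq_norm :: "real \<Rightarrow> (nat \<Rightarrow> real) \<Rightarrow> real" where
  "lq_norm q x = (\<Sum>i. \<bar>x i\<bar> powr q) powr (1 / q)"

(* X = (\<Sum> \<oplus> ell_q^n)_{ell_p}: x (n, i) is the i-th coordinate (i < n) of the n-th summand *)
definition Xsp :: "real \<Rightarrow> real \<Rightarrow> (nat \<times> nat \<Rightarrow> real) set" where
  "Xsp p q = {x. (\<forall>n i. n \<le> i \<longrightarrow> x (n, i) = 0) \<and>
      summable (\<lambda>n. ((\<Sum>i<n. \<bar>x (n, i)\<bar> powr q) powr (1 / q)) powr p)}"

definition X_norm :: "real \<Rightarrow> real \<Rightarrow> (nat \<times> nat \<Rightarrow> real) \<Rightarrow> real" where
  "X_norm p q x = (\<Sum>n. ((\<Sum>i<n. \<bar>x (n, i)\<bar> powr q) powr (1 / q)) powr p) powr (1 / p)"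

definition proj_n :: "nat \<Rightarrow> (nat \<Rightarrow> real) \<Rightarrow> (nat \<Rightarrow> real)" where
  "proj_n n y = (\<lambda>i. if i < n then y i else 0)"

definition incl_n :: "nat \<Rightarrow> (nat \<Rightarrow> real) \<Rightarrow> (nat \<times> nat \<Rightarrow> real)" where
  "incl_n n v = (\<lambda>(m, i). if m = n \<and> i < n then v i else 0)"

end

theory Submission
  imports Defs "HOL-Library.Diagonal_Subsequence"
begin

text \<open>
  Let \<open>D\<^sub>j\<close> (\<open>j \<le> k\<close>) be the derivatives of \<open>F\<close>, with \<open>D\<^sub>k\<close> Hoelder of exponent
  \<open>\<alpha> = r - k\<close> and constant \<open>M\<close>. Since \<open>i\<^sub>n \<circ> \<pi>\<^sub>n\<close> is a linear contraction from \<open>\<ell>\<^sub>q\<close> to \<open>X\<close>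
  mapping \<open>0\<close> to \<open>0\<close>, every \<open>F\<^sub>n\<close> has derivatives satisfying the same Hoelder bound, and
  its derivatives at \<open>0\<close> are bounded independently of \<open>n\<close>. Integrating along segments
  (mean value theorem) turns this into bounds, Hoelder continuity and Taylor remainder
  estimates for all derivatives, uniform in \<open>n\<close> on bounded sets. A diagonal argument over
  the countable dense set of finitely supported rational sequences yields a subsequence along
  which all derivatives converge at rational arguments; by equicontinuity they converge
  everywhere, and the uniform estimates pass to the limit, so the limit jet makes \<open>F\<^sup>*\<close>
  uniformly \<open>H\<^sup>r\<close>-smooth.
\<close>

lemma prod_list_map_nonneg:
  fixes N :: "'a \<Rightarrow> real"
  shows "(\<And>h. h \<in> set hs \<Longrightarrow> 0 \<le> N h) \<Longrightarrow> 0 \<le> prod_list (map N hs)"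
  by (rule prod_list_nonneg) auto

lemma prod_list_map_mono:
  fixes N N' :: "'a \<Rightarrow> real"
  assumes "\<And>h. h \<in> set hs \<Longrightarrow> 0 \<le> N h \<and> N h \<le> N' h"
  shows "prod_list (map N hs) \<le> prod_list (map N' hs)"
  using assms
proof (induction hs)
  case (Cons h hs)
  moreover have "0 \<le> prod_list (map N hs)"
    using Cons.prems by (intro prod_list_map_nonneg) auto
  ultimately show ?case
    by (simp add: mult_mono')
qed simp

lemma prod_list_map_le_power:
  fixes N :: "'a \<Rightarrow> real"
  assumes "\<And>h. h \<in> set hs \<Longrightarrow> 0 \<le> N h \<and> N h \<le> B"
  shows "prod_list (map N hs) \<le> B ^ length hs"
  using prod_list_map_mono[of hs N "\<lambda>_. B"] assms by (simp add: map_replicate_const)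

lemma abs_diff_le_of_deriv_bound:
  fixes \<phi> \<phi>' :: "real \<Rightarrow> real"
  assumes "\<And>t. 0 \<le> t \<Longrightarrow> t \<le> 1 \<Longrightarrow> (\<phi> has_real_derivative \<phi>' t) (at t)"
    and "\<And>t. 0 \<le> t \<Longrightarrow> t \<le> 1 \<Longrightarrow> \<bar>\<phi>' t\<bar> \<le> B"
  shows "\<bar>\<phi> 1 - \<phi> 0\<bar> \<le> B"
proof -
  obtain z where "0 < z" "z < 1" "\<phi> 1 - \<phi> 0 = (1 - 0) * \<phi>' z"
    using MVT2[of 0 1 \<phi> \<phi>'] assms(1) by auto
  then show ?thesis
    using assms(2)[of z] by simp
qed

lemma le_powr_of_le_one:
  fixes x \<alpha> :: real
  assumes "0 \<le> x" "x \<le> 1" "\<alpha> \<le> 1"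
  shows "x \<le> x powr \<alpha>"
  using powr_mono'[OF assms(3,1,2)] assms(1) by simp

lemma powr_le_one_plus:
  fixes a \<alpha> :: real
  assumes "0 \<le> a" "0 < \<alpha>" "\<alpha> \<le> 1"
  shows "a powr \<alpha> \<le> 1 + a"
proof (cases "a \<le> 1")
  case True
  then show ?thesis
    using assms powr_le1[of \<alpha> a] by simp
next
  case False
  then show ?thesis
    using assms powr_mono[of \<alpha> 1 a] by simp
qed

lemma exists_small_powr_le:
  fixes A \<alpha> e :: real
  assumes "0 \<le> A" "0 < \<alpha>" "0 < e"
  obtains \<eta> where "0 < \<eta>" "\<eta> \<le> 1" "A * \<eta> powr \<alpha> < e"
proof
  define \<eta> where "\<eta> = min 1 ((e / (A + 1)) powr (1 / \<alpha>))"
  have pos: "0 < e / (A + 1)"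
    using assms by simp
  show "0 < \<eta>" "\<eta> \<le> 1"
    unfolding \<eta>_def using pos by auto
  have "\<eta> powr \<alpha> \<le> ((e / (A + 1)) powr (1 / \<alpha>)) powr \<alpha>"
    unfolding \<eta>_def using assms pos by (intro powr_mono2) auto
  also have "\<dots> = e / (A + 1)"
    using assms pos by (simp add: powr_powr)
  finally have "A * \<eta> powr \<alpha> \<le> A * (e / (A + 1))"
    using assms by (intro mult_left_mono) auto
  also have "\<dots> < e"
    using assms by (simp add: field_simps)
  finally show "A * \<eta> powr \<alpha> < e" .
qed

section \<open>Bounded multilinear forms\<close>

definition mbound ::
  "('i \<Rightarrow> real) set \<Rightarrow> (('i \<Rightarrow> real) \<Rightarrow> real) \<Rightarrow> nat \<Rightarrow> (('i \<Rightarrow> real) list \<Rightarrow> real) \<Rightarrow> real \<Rightarrow> bool"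
  where "mbound V N j T C \<longleftrightarrow>
    (\<forall>hs. length hs = j \<and> set hs \<subseteq> V \<longrightarrow> \<bar>T hs\<bar> \<le> C * prod_list (map N hs))"

lemma mboundI:
  "(\<And>hs. length hs = j \<Longrightarrow> set hs \<subseteq> V \<Longrightarrow> \<bar>T hs\<bar> \<le> C * prod_list (map N hs)) \<Longrightarrow> mbound V N j T C"
  by (simp add: mbound_def)

lemma mboundD:
  "mbound V N j T C \<Longrightarrow> length hs = j \<Longrightarrow> set hs \<subseteq> V \<Longrightarrow> \<bar>T hs\<bar> \<le> C * prod_list (map N hs)"
  by (simp add: mbound_def)

lemma bounded_multilinear_on_iff:
  "bounded_multilinear_on V N j T \<longleftrightarrow> multilinear_on V j T \<and> (\<exists>C. mbound V N j T C)"
  by (simp add: bounded_multilinear_on_def mbound_def)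

lemma mbound_mono:
  assumes "mbound V N j T C" "C \<le> C'" "\<And>h. h \<in> V \<Longrightarrow> 0 \<le> N h"
  shows "mbound V N j T C'"
proof (rule mboundI)
  fix hs assume "length hs = j" "set hs \<subseteq> V"
  with assms have "\<bar>T hs\<bar> \<le> C * prod_list (map N hs)" "0 \<le> prod_list (map N hs)"
    by (auto simp: mbound_def intro!: prod_list_map_nonneg)
  with \<open>C \<le> C'\<close> show "\<bar>T hs\<bar> \<le> C' * prod_list (map N hs)"
    by (meson mult_right_mono order_trans)
qed

lemma mbound_diff:
  assumes "mbound V N j T1 C1" "mbound V N j T2 C2"
  shows "mbound V N j (\<lambda>hs. T1 hs - T2 hs) (C1 + C2)"
proof (rule mboundI)
  fix hs assume "length hs = j" "set hs \<subseteq> V"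
  with assms have "\<bar>T1 hs\<bar> \<le> C1 * prod_list (map N hs)" "\<bar>T2 hs\<bar> \<le> C2 * prod_list (map N hs)"
    by (auto simp: mbound_def)
  then show "\<bar>T1 hs - T2 hs\<bar> \<le> (C1 + C2) * prod_list (map N hs)"
    by (simp add: distrib_right)
qed

lemma mbound_of_mbound_diff:
  assumes "mbound V N j (\<lambda>hs. T hs - S hs) C" "mbound V N j S C'"
  shows "mbound V N j T (C + C')"
  using mbound_diff[OF assms(1), of "\<lambda>hs. - S hs" C'] assms(2) by (simp add: mbound_def)

lemma mbound_Cons:
  assumes "mbound V N (Suc j) T C" "h \<in> V"
  shows "mbound V N j (\<lambda>hs. T (h # hs)) (C * N h)"
proof (rule mboundI)
  fix hs assume "length hs = j" "set hs \<subseteq> V"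
  then show "\<bar>T (h # hs)\<bar> \<le> C * N h * prod_list (map N hs)"
    using mboundD[OF assms(1), of "h # hs"] assms(2) by (simp add: mult.assoc)
qed

lemma mbound_tendsto:
  assumes "\<And>hs. length hs = j \<Longrightarrow> set hs \<subseteq> V \<Longrightarrow> (\<lambda>m. T m hs) \<longlonglongrightarrow> T' hs"
    and "\<And>m. mbound V N j (T m) C"
  shows "mbound V N j T' C"
proof (rule mboundI)
  fix hs assume hs: "length hs = j" "set hs \<subseteq> V"
  have "(\<lambda>m. \<bar>T m hs\<bar>) \<longlonglongrightarrow> \<bar>T' hs\<bar>"
    using assms(1)[OF hs] by (rule tendsto_rabs)
  then show "\<bar>T' hs\<bar> \<le> C * prod_list (map N hs)"
    using assms(2) hs by (intro LIMSEQ_le_const2) (auto simp: mbound_def)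
qed

lemma multilinear_on_scale:
  assumes "multilinear_on V j T" "length as + length bs + 1 = j"
    "set as \<subseteq> V" "set bs \<subseteq> V" "x \<in> V"
  shows "T (as @ vscale c x # bs) = c * T (as @ x # bs)"
proof -
  have "vadd (vscale c x) (vscale 0 x) = vscale c x"
    by (simp add: fun_eq_iff vadd_def vdiff_def vscale_def)
  moreover have "T (as @ vadd (vscale c x) (vscale 0 x) # bs) = c * T (as @ x # bs) + 0 * T (as @ x # bs)"
    using assms unfolding multilinear_on_def by blast
  ultimately show ?thesis
    by simp
qed

lemma multilinear_on_diff_arg:
  assumes "multilinear_on V j T" "length as + length bs + 1 = j"
    "set as \<subseteq> V" "set bs \<subseteq> V" "x \<in> V" "y \<in> V"
  shows "T (as @ vdiff x y # bs) = T (as @ x # bs) - T (as @ y # bs)"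
proof -
  have "vadd (vscale 1 x) (vscale (-1) y) = vdiff x y"
    by (simp add: fun_eq_iff vadd_def vdiff_def vscale_def)
  moreover have "T (as @ vadd (vscale 1 x) (vscale (-1) y) # bs) = 1 * T (as @ x # bs) + (-1) * T (as @ y # bs)"
    using assms unfolding multilinear_on_def by blast
  ultimately show ?thesis
    by simp
qed

lemma multilinear_on_diff:
  "multilinear_on V j T1 \<Longrightarrow> multilinear_on V j T2 \<Longrightarrow> multilinear_on V j (\<lambda>hs. T1 hs - T2 hs)"
  unfolding multilinear_on_def by (simp add: algebra_simps)

lemma multilinear_on_Cons:
  assumes "multilinear_on V (Suc j) T" "h \<in> V"
  shows "multilinear_on V j (\<lambda>hs. T (h # hs))"
  unfolding multilinear_on_def
proof (intro allI impI)
  fix as bs x y a b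
  assume "length as + length bs + 1 = j \<and> set as \<subseteq> V \<and> set bs \<subseteq> V \<and> x \<in> V \<and> y \<in> V"
  then have "T ((h # as) @ vadd (vscale a x) (vscale b y) # bs) = a * T ((h # as) @ x # bs) + b * T ((h # as) @ y # bs)"
    using assms(1)[unfolded multilinear_on_def, rule_format, of "h # as" bs x y a b] assms(2) by auto
  then show "T (h # as @ vadd (vscale a x) (vscale b y) # bs) = a * T (h # as @ x # bs) + b * T (h # as @ y # bs)"
    by simp
qed

lemma multilinear_on_tendsto:
  assumes "\<And>hs. length hs = j \<Longrightarrow> set hs \<subseteq> V \<Longrightarrow> (\<lambda>m. T m hs) \<longlonglongrightarrow> T' hs"
    and "\<And>m. multilinear_on V j (T m)"
    and add_in: "\<And>x y. x \<in> V \<Longrightarrow> y \<in> V \<Longrightarrow> vadd x y \<in> V"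
    and scale_in: "\<And>c x. x \<in> V \<Longrightarrow> vscale c x \<in> V"
  shows "multilinear_on V j T'"
  unfolding multilinear_on_def
proof (intro allI impI)
  fix as bs x y a b
  assume H: "length as + length bs + 1 = j \<and> set as \<subseteq> V \<and> set bs \<subseteq> V \<and> x \<in> V \<and> y \<in> V"
  let ?L = "as @ vadd (vscale a x) (vscale b y) # bs"
  have "(\<lambda>m. T m ?L) \<longlonglongrightarrow> T' ?L"
    using H add_in scale_in by (intro assms(1)) auto
  moreover have "(\<lambda>m. T m ?L) = (\<lambda>m. a * T m (as @ x # bs) + b * T m (as @ y # bs))"
    using assms(2) H unfolding multilinear_on_def by blast
  moreover have "(\<lambda>m. a * T m (as @ x # bs) + b * T m (as @ y # bs)) \<longlonglongrightarrow> a * T' (as @ x # bs) + b * T' (as @ y # bs)"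
    using H by (intro tendsto_intros assms(1)) auto
  ultimately show "T' ?L = a * T' (as @ x # bs) + b * T' (as @ y # bs)"
    using LIMSEQ_unique by metis
qed

lemma bounded_multilinear_on_diff:
  "bounded_multilinear_on V N j T1 \<Longrightarrow> bounded_multilinear_on V N j T2 \<Longrightarrow>
    bounded_multilinear_on V N j (\<lambda>hs. T1 hs - T2 hs)"
  unfolding bounded_multilinear_on_iff using multilinear_on_diff mbound_diff by blast

lemma bounded_multilinear_on_Cons:
  "bounded_multilinear_on V N (Suc j) T \<Longrightarrow> h \<in> V \<Longrightarrow> bounded_multilinear_on V N j (\<lambda>hs. T (h # hs))"
  unfolding bounded_multilinear_on_iff using multilinear_on_Cons mbound_Cons by blast

lemma mnorm_upper:
  assumes "mbound V N j T C" "\<And>h. h \<in> V \<Longrightarrow> 0 \<le> N h"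
    and "length hs = j" "set hs \<subseteq> V" "\<forall>h\<in>set hs. N h \<le> 1"
  shows "\<bar>T hs\<bar> \<le> mnorm V N j T"
  unfolding mnorm_def
proof (rule cSup_upper)
  show "bdd_above {\<bar>T hs\<bar> | hs. length hs = j \<and> set hs \<subseteq> V \<and> (\<forall>h\<in>set hs. N h \<le> 1)}"
  proof (rule bdd_aboveI)
    fix x assume "x \<in> {\<bar>T hs\<bar> | hs. length hs = j \<and> set hs \<subseteq> V \<and> (\<forall>h\<in>set hs. N h \<le> 1)}"
    then obtain gs where gs: "x = \<bar>T gs\<bar>" "length gs = j" "set gs \<subseteq> V" "\<forall>h\<in>set gs. N h \<le> 1"
      by blast
    have "0 \<le> prod_list (map N gs)" "prod_list (map N gs) \<le> 1"
      using gs assms(2) prod_list_map_le_power[of gs N 1] by (auto intro!: prod_list_map_nonneg)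
    then have "C * prod_list (map N gs) \<le> \<bar>C\<bar>"
      by (metis abs_ge_self abs_ge_zero dual_order.trans mult_left_le mult_right_mono)
    moreover have "x \<le> C * prod_list (map N gs)"
      using assms(1) gs by (simp add: mbound_def)
    ultimately show "x \<le> \<bar>C\<bar>"
      by linarith
  qed
qed (use assms in auto)

lemma mnorm_least:
  assumes "(\<lambda>_. 0) \<in> V" "N (\<lambda>_. 0) \<le> 1"
    and "\<And>hs. length hs = j \<Longrightarrow> set hs \<subseteq> V \<Longrightarrow> \<forall>h\<in>set hs. N h \<le> 1 \<Longrightarrow> \<bar>T hs\<bar> \<le> B"
  shows "mnorm V N j T \<le> B"
  unfolding mnorm_def
proof (rule cSup_least)
  have "\<bar>T (replicate j (\<lambda>_. 0))\<bar> \<in> {\<bar>T hs\<bar> | hs. length hs = j \<and> set hs \<subseteq> V \<and> (\<forall>h\<in>set hs. N h \<le> 1)}"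
    using assms(1,2) by auto
  then show "{\<bar>T hs\<bar> | hs. length hs = j \<and> set hs \<subseteq> V \<and> (\<forall>h\<in>set hs. N h \<le> 1)} \<noteq> {}"
    by blast
qed (use assms(3) in auto)

lemma mnorm_map_le:
  assumes "mbound W N' j T C" "\<And>h. h \<in> W \<Longrightarrow> 0 \<le> N' h" "(\<lambda>_. 0) \<in> V" "N (\<lambda>_. 0) \<le> 1"
    and "\<And>h. h \<in> V \<Longrightarrow> N h \<le> 1 \<Longrightarrow> P h \<in> W \<and> N' (P h) \<le> 1"
  shows "mnorm V N j (\<lambda>hs. T (map P hs)) \<le> mnorm W N' j T"
  using assms by (intro mnorm_least mnorm_upper[OF assms(1,2)]) auto

section \<open>Quasinormed spaces\<close>

text \<open>The constant 4 in the quasi-triangle inequality is what the spaces \<open>\<ell>\<^sub>q\<close>, \<open>q \<ge> 1\<close>,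
  satisfy without Minkowski's inequality; any constant would do.\<close>

locale quasinormed_space =
  fixes V :: "('i \<Rightarrow> real) set" and N :: "('i \<Rightarrow> real) \<Rightarrow> real"
  assumes zero_in: "(\<lambda>_. 0) \<in> V"
    and add_in: "x \<in> V \<Longrightarrow> y \<in> V \<Longrightarrow> vadd x y \<in> V"
    and scale_in: "x \<in> V \<Longrightarrow> vscale c x \<in> V"
    and N_nonneg: "x \<in> V \<Longrightarrow> 0 \<le> N x"
    and N_scale: "x \<in> V \<Longrightarrow> N (vscale c x) = \<bar>c\<bar> * N x"
    and N_quasi_triangle: "x \<in> V \<Longrightarrow> y \<in> V \<Longrightarrow> N (vadd x y) \<le> 4 * (N x + N y)"
begin

lemma N_zero: "N (\<lambda>_. 0) = 0"
  using N_scale[OF zero_in, of 0] by (simp add: vscale_def)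

lemma diff_in: "x \<in> V \<Longrightarrow> y \<in> V \<Longrightarrow> vdiff x y \<in> V"
  using add_in[OF _ scale_in, of x y "-1"] by (simp add: vadd_def vscale_def vdiff_def)

lemma N_vdiff_commute: "x \<in> V \<Longrightarrow> y \<in> V \<Longrightarrow> N (vdiff x y) = N (vdiff y x)"
  using N_scale[OF diff_in, of y x "-1"] by (simp add: vscale_def vdiff_def)

lemma N_scale_le: "x \<in> V \<Longrightarrow> \<bar>c\<bar> \<le> 1 \<Longrightarrow> N (vscale c x) \<le> N x"
  using N_scale[of x c] N_nonneg[of x] mult_left_le_one_le[of "N x" "\<bar>c\<bar>"] by simp

lemma prod_list_N_nonneg: "set hs \<subseteq> V \<Longrightarrow> 0 \<le> prod_list (map N hs)"
  using N_nonneg by (intro prod_list_map_nonneg) auto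

lemma prod_list_N_le_one: "set hs \<subseteq> V \<Longrightarrow> \<forall>h\<in>set hs. N h \<le> 1 \<Longrightarrow> prod_list (map N hs) \<le> 1"
  using prod_list_map_le_power[of hs N 1] N_nonneg by auto

lemma multilinear_on_scale_map:
  assumes "multilinear_on V j T"
  shows "set as \<subseteq> V \<Longrightarrow> set hs \<subseteq> V \<Longrightarrow> length as + length hs = j \<Longrightarrow>
    T (as @ map (\<lambda>h. vscale (f h) h) hs) = prod_list (map f hs) * T (as @ hs)"
proof (induction hs arbitrary: as)
  case (Cons h hs)
  have "T (as @ map (\<lambda>h. vscale (f h) h) (h # hs)) = T ((as @ [vscale (f h) h]) @ map (\<lambda>h. vscale (f h) h) hs)"
    by simp
  also have "\<dots> = prod_list (map f hs) * T (as @ vscale (f h) h # hs)"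
    using Cons.prems scale_in by (subst Cons.IH) auto
  also have "T (as @ vscale (f h) h # hs) = f h * T (as @ h # hs)"
    using Cons.prems by (intro multilinear_on_scale[OF assms]) auto
  finally show ?case
    by simp
qed simp

lemma mbound_mnorm:
  assumes "bounded_multilinear_on V N j T"
  shows "mbound V N j T (mnorm V N j T)"
proof (rule mboundI)
  fix hs assume hs: "length hs = j" "set hs \<subseteq> V"
  obtain C where C: "mbound V N j T C" and ml: "multilinear_on V j T"
    using assms unfolding bounded_multilinear_on_iff by blast
  show "\<bar>T hs\<bar> \<le> mnorm V N j T * prod_list (map N hs)"
  proof (cases "\<exists>h\<in>set hs. N h = 0")
    case True
    then have "prod_list (map N hs) = 0"
      by (simp add: prod_list_zero_iff) (metis image_eqI)
    then show ?thesis
      using mboundD[OF C hs] by simp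
  next
    case False
    have pos: "0 < N h" if "h \<in> set hs" for h
      using that hs N_nonneg[of h] False by force
    have "prod_list (map N hs) \<noteq> 0"
      using False by (auto simp: prod_list_zero_iff)
    then have "0 < prod_list (map N hs)"
      using prod_list_N_nonneg[OF hs(2)] by linarith
    moreover have "prod_list (map (\<lambda>h. 1 / N h) hs) = 1 / prod_list (map N hs)"
      by (induction hs) auto
    then have "T (map (\<lambda>h. vscale (1 / N h) h) hs) = T hs / prod_list (map N hs)"
      using multilinear_on_scale_map[OF ml, of "[]" hs "\<lambda>h. 1 / N h"] hs by simp
    moreover have "\<bar>T (map (\<lambda>h. vscale (1 / N h) h) hs)\<bar> \<le> mnorm V N j T"
      using hs pos scale_in N_scale by (intro mnorm_upper[OF C N_nonneg]) (auto simp: subset_iff less_imp_le)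
    ultimately show ?thesis
      by (simp add: abs_divide divide_le_eq)
  qed
qed

lemma mbound_of_mnorm_le:
  "bounded_multilinear_on V N j T \<Longrightarrow> mnorm V N j T \<le> C \<Longrightarrow> mbound V N j T C"
  using mbound_mono[OF mbound_mnorm] N_nonneg by blast

lemma mnorm_le_of_mbound:
  assumes "mbound V N j T C" "0 \<le> C"
  shows "mnorm V N j T \<le> C"
proof (rule mnorm_least[OF zero_in])
  show "N (\<lambda>_. 0) \<le> 1"
    by (simp add: N_zero)
  fix hs assume hs: "length hs = j" "set hs \<subseteq> V" "\<forall>h\<in>set hs. N h \<le> 1"
  then have "\<bar>T hs\<bar> \<le> C * prod_list (map N hs)"
    using mboundD[OF assms(1)] by blast
  also have "\<dots> \<le> C"
    using assms(2) prod_list_N_le_one[OF hs(2,3)] by (simp add: mult_left_le)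
  finally show "\<bar>T hs\<bar> \<le> C" .
qed

lemma has_mderiv_at_remainder_bound:
  assumes "has_mderiv_at V N j D D' y" "0 < \<epsilon>"
    and "\<And>h. h \<in> V \<Longrightarrow> bounded_multilinear_on V N j (\<lambda>hs. D (vadd y h) hs - D y hs - D' (h # hs))"
  obtains \<delta> where "0 < \<delta>"
    "\<And>h hs. h \<in> V \<Longrightarrow> N h < \<delta> \<Longrightarrow> length hs = j \<Longrightarrow> set hs \<subseteq> V \<Longrightarrow>
      \<bar>D (vadd y h) hs - D y hs - D' (h # hs)\<bar> \<le> \<epsilon> * N h * prod_list (map N hs)"
proof -
  obtain \<delta> where "0 < \<delta>" and \<delta>: "\<And>h. h \<in> V \<Longrightarrow> N h < \<delta> \<Longrightarrow>
      mnorm V N j (\<lambda>hs. D (vadd y h) hs - D y hs - D' (h # hs)) \<le> \<epsilon> * N h"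
    using assms(1,2) unfolding has_mderiv_at_def by blast
  show ?thesis
  proof (rule that[OF \<open>0 < \<delta>\<close>])
    fix h hs assume h: "h \<in> V" "N h < \<delta>" and hs: "length hs = j" "set hs \<subseteq> V"
    have "mbound V N j (\<lambda>hs. D (vadd y h) hs - D y hs - D' (h # hs)) (\<epsilon> * N h)"
      using assms(3)[OF h(1)] \<delta>[OF h] by (rule mbound_of_mnorm_le)
    then show "\<bar>D (vadd y h) hs - D y hs - D' (h # hs)\<bar> \<le> \<epsilon> * N h * prod_list (map N hs)"
      using mboundD hs by blast
  qed
qed

lemma has_mderiv_at_line_remainder:
  assumes der: "has_mderiv_at V N j D D' y"
    and bml: "\<And>u. u \<in> V \<Longrightarrow> bounded_multilinear_on V N j (\<lambda>hs. D (vadd y u) hs - D y hs - D' (u # hs))"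
    and ml: "multilinear_on V (Suc j) D'"
    and h: "h \<in> V" and hs: "length hs = j" "set hs \<subseteq> V" and "0 < e"
  shows "\<exists>d>0. \<forall>x. \<bar>x\<bar> < d \<longrightarrow> \<bar>D (vadd y (vscale x h)) hs - D y hs - x * D' (h # hs)\<bar> \<le> e * \<bar>x\<bar>"
proof -
  define P where "P = prod_list (map N hs)"
  have P: "0 \<le> P" and Nh: "0 \<le> N h"
    unfolding P_def using prod_list_N_nonneg[OF hs(2)] N_nonneg[OF h] by auto
  define \<epsilon> where "\<epsilon> = e / ((N h + 1) * (P + 1))"
  have "0 < \<epsilon>"
    unfolding \<epsilon>_def using \<open>0 < e\<close> P Nh by auto
  have "\<epsilon> * N h * P = e * (N h / (N h + 1)) * (P / (P + 1))"
    unfolding \<epsilon>_def by (simp add: field_simps)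
  also have "\<dots> \<le> e * 1 * 1"
    using \<open>0 < e\<close> Nh P by (intro mult_mono) auto
  finally have \<epsilon>_small: "\<epsilon> * N h * P \<le> e"
    by simp
  obtain \<delta> where "0 < \<delta>" and \<delta>: "\<And>u hs. u \<in> V \<Longrightarrow> N u < \<delta> \<Longrightarrow> length hs = j \<Longrightarrow>
      set hs \<subseteq> V \<Longrightarrow> \<bar>D (vadd y u) hs - D y hs - D' (u # hs)\<bar> \<le> \<epsilon> * N u * prod_list (map N hs)"
    using has_mderiv_at_remainder_bound[OF der \<open>0 < \<epsilon>\<close> bml] by blast
  show ?thesis
  proof (intro exI[of _ "\<delta> / (N h + 1)"] conjI allI impI)
    show "0 < \<delta> / (N h + 1)"
      using \<open>0 < \<delta>\<close> Nh by auto
    fix x :: real assume x: "\<bar>x\<bar> < \<delta> / (N h + 1)"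
    have "\<bar>x\<bar> * N h \<le> \<bar>x\<bar> * (N h + 1)"
      by (simp add: mult_left_mono)
    also have "\<dots> < \<delta>"
      using x Nh by (simp add: less_divide_eq)
    finally have "N (vscale x h) < \<delta>"
      using N_scale[OF h] by simp
    then have "\<bar>D (vadd y (vscale x h)) hs - D y hs - D' (vscale x h # hs)\<bar> \<le> \<epsilon> * N h * P * \<bar>x\<bar>"
      unfolding P_def using \<delta>[OF scale_in[OF h] _ hs] N_scale[OF h] by (simp add: mult_ac)
    also have "\<dots> \<le> e * \<bar>x\<bar>"
      using \<epsilon>_small by (intro mult_right_mono) auto
    finally show "\<bar>D (vadd y (vscale x h)) hs - D y hs - x * D' (h # hs)\<bar> \<le> e * \<bar>x\<bar>"
      using multilinear_on_scale[OF ml, of "[]" hs h x] hs h by simp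
  qed
qed

lemma has_real_derivative_along_line:
  assumes bml: "\<And>y. y \<in> V \<Longrightarrow> bounded_multilinear_on V N j (D y)"
      "\<And>y. y \<in> V \<Longrightarrow> bounded_multilinear_on V N (Suc j) (D' y)"
    and der: "\<And>y. y \<in> V \<Longrightarrow> has_mderiv_at V N j D (D' y) y"
    and y: "y \<in> V" and h: "h \<in> V" and hs: "length hs = j" "set hs \<subseteq> V"
  shows "((\<lambda>t. D (vadd y (vscale t h)) hs) has_real_derivative D' (vadd y (vscale t h)) (h # hs)) (at t)"
proof -
  define y' where "y' = vadd y (vscale t h)"
  have y': "y' \<in> V"
    unfolding y'_def using y h add_in scale_in by blast
  have line: "vadd y' (vscale (s - t) h) = vadd y (vscale s h)" for s
    unfolding y'_def by (simp add: fun_eq_iff vadd_def vscale_def algebra_simps)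
  have "\<exists>d>0. \<forall>s. \<bar>s - t\<bar> < d \<longrightarrow>
      \<bar>D (vadd y (vscale s h)) hs - D y' hs - D' y' (h # hs) * (s - t)\<bar> \<le> e * \<bar>s - t\<bar>" if "0 < e" for e
  proof -
    have "\<exists>d>0. \<forall>x. \<bar>x\<bar> < d \<longrightarrow> \<bar>D (vadd y' (vscale x h)) hs - D y' hs - x * D' y' (h # hs)\<bar> \<le> e * \<bar>x\<bar>"
    proof (rule has_mderiv_at_line_remainder[OF der[OF y'] _ _ h hs that])
      show "bounded_multilinear_on V N j (\<lambda>hs. D (vadd y' u) hs - D y' hs - D' y' (u # hs))" if "u \<in> V" for u
        using that y' add_in by (intro bounded_multilinear_on_diff bounded_multilinear_on_Cons bml) auto
      show "multilinear_on V (Suc j) (D' y')"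
        using bml(2)[OF y'] unfolding bounded_multilinear_on_iff by blast
    qed
    then obtain d where "0 < d"
      and d: "\<And>x. \<bar>x\<bar> < d \<Longrightarrow> \<bar>D (vadd y' (vscale x h)) hs - D y' hs - x * D' y' (h # hs)\<bar> \<le> e * \<bar>x\<bar>"
      by blast
    show ?thesis
      using \<open>0 < d\<close> d[of "s - t" for s] unfolding line by (auto simp: mult.commute)
  qed
  then show ?thesis
    unfolding has_field_derivative_def has_derivative_at_alt y'_def
    by (auto simp: bounded_linear_mult_right vadd_def vscale_def)
qed

lemma N_le_of_vdiff: "x \<in> V \<Longrightarrow> y \<in> V \<Longrightarrow> N y \<le> 4 * (N x + N (vdiff x y))"
  using N_quasi_triangle[OF _ scale_in[OF diff_in], of x x y "-1"] N_scale[OF diff_in, of x y "-1"]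
  by (simp add: vadd_def vdiff_def vscale_def)

lemma dense_approx_args:
  assumes Q: "Q \<subseteq> V" "\<And>y e. y \<in> V \<Longrightarrow> 0 < e \<Longrightarrow> \<exists>y'\<in>Q. N (vdiff y y') < e"
    and hs: "set hs \<subseteq> V" and \<eta>: "0 < \<eta>" "\<eta> \<le> 1"
  obtains hs' where "set hs' \<subseteq> Q"
    "list_all2 (\<lambda>h h'. N h \<le> 4 * (sum_list (map N hs) + 1) \<and> N h' \<le> 4 * (sum_list (map N hs) + 1)
      \<and> N (vdiff h h') \<le> \<eta>) hs hs'"
proof -
  obtain pick where pick: "\<And>h. h \<in> V \<Longrightarrow> pick h \<in> Q \<and> N (vdiff h (pick h)) < \<eta>"
    using Q(2)[OF _ \<eta>(1)] by metis
  have "N h \<le> 4 * (sum_list (map N hs) + 1) \<and> N (pick h) \<le> 4 * (sum_list (map N hs) + 1)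
      \<and> N (vdiff h (pick h)) \<le> \<eta>" if "h \<in> set hs" for h
  proof -
    have h: "h \<in> V" "N h \<le> sum_list (map N hs)"
      using that hs N_nonneg by (auto intro!: member_le_sum_list simp: subset_iff)
    then have "N (pick h) \<le> 4 * (N h + N (vdiff h (pick h)))"
      using N_le_of_vdiff pick Q(1) by blast
    then show ?thesis
      using h pick[OF h(1)] \<eta> N_nonneg[OF h(1)] by auto
  qed
  then show ?thesis
    using that[of "map pick hs"] pick hs by (auto simp: list_all2_map2 list_all2_same)
qed

lemma multilinear_on_change_arg:
  assumes ml: "multilinear_on V j T" and C: "mbound V N j T C"
    and V: "set as \<subseteq> V" "set hs \<subseteq> V" "h \<in> V" "h' \<in> V" and len: "length as + length hs + 1 = j"
  shows "\<bar>T (as @ h # hs) - T (as @ h' # hs)\<bar>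
    \<le> C * prod_list (map N as) * N (vdiff h h') * prod_list (map N hs)"
proof -
  have "T (as @ h # hs) - T (as @ h' # hs) = T (as @ vdiff h h' # hs)"
    using V len by (intro multilinear_on_diff_arg[OF ml, symmetric])
  then show ?thesis
    using mboundD[OF C, of "as @ vdiff h h' # hs"] V len diff_in by (simp add: mult_ac)
qed

lemma multilinear_on_perturb_args:
  assumes ml: "multilinear_on V j T" and C: "mbound V N j T C" "0 \<le> C"
    and B: "1 \<le> B" and \<eta>: "0 \<le> \<eta>"
  shows "list_all2 (\<lambda>h h'. N h \<le> B \<and> N h' \<le> B \<and> N (vdiff h h') \<le> \<eta>) hs hs' \<Longrightarrow>
    set as \<subseteq> V \<Longrightarrow> set hs \<subseteq> V \<Longrightarrow> set hs' \<subseteq> V \<Longrightarrow> length as + length hs = j \<Longrightarrow>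
    \<bar>T (as @ hs) - T (as @ hs')\<bar> \<le> real (length hs) * C * prod_list (map N as) * B ^ length hs * \<eta>"
proof (induction hs hs' arbitrary: as rule: list_all2_induct)
  case (Cons h hs h' hs')
  have V: "h \<in> V" "h' \<in> V" "set hs \<subseteq> V" "set hs' \<subseteq> V"
    using Cons.prems by auto
  have len: "length hs' = length hs"
    using Cons.hyps(2) by (simp add: list_all2_lengthD)
  define W where "W = C * prod_list (map N as) * B ^ length hs * \<eta>"
  have W: "0 \<le> W"
    unfolding W_def using C(2) prod_list_N_nonneg[OF Cons.prems(1)] B \<eta> by simp
  have "\<bar>T ((as @ [h]) @ hs) - T ((as @ [h]) @ hs')\<bar>
      \<le> real (length hs) * C * prod_list (map N (as @ [h])) * B ^ length hs * \<eta>"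
    using Cons.prems V by (intro Cons.IH) auto
  also have "\<dots> = real (length hs) * W * N h"
    unfolding W_def by (simp add: mult_ac)
  also have "\<dots> \<le> real (length hs) * W * B"
    using Cons.hyps(1) W by (intro mult_left_mono) auto
  finally have step_hs: "\<bar>T (as @ h # hs) - T (as @ h # hs')\<bar> \<le> real (length hs) * W * B"
    by simp
  have pow: "prod_list (map N hs') \<le> B ^ length hs"
    using prod_list_map_le_power[of hs' N B] list_all2_nthD2[OF Cons.hyps(2)] V(4) N_nonneg len
    by (metis in_set_conv_nth subsetD)
  have factor: "C * prod_list (map N as) * N (vdiff h h') \<le> C * prod_list (map N as) * \<eta>"
    using Cons.hyps(1) C(2) prod_list_N_nonneg[OF Cons.prems(1)] by (intro mult_left_mono) auto
  have "C * prod_list (map N as) * N (vdiff h h') * prod_list (map N hs')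
      \<le> C * prod_list (map N as) * \<eta> * B ^ length hs"
    by (rule mult_mono[OF factor pow]) (use C(2) \<eta> prod_list_N_nonneg[OF Cons.prems(1)] prod_list_N_nonneg[OF V(4)] in auto)
  then have "\<bar>T (as @ h # hs') - T (as @ h' # hs')\<bar> \<le> W"
    using multilinear_on_change_arg[OF ml C(1) Cons.prems(1) V(4,1,2)] Cons.prems(4) len
    unfolding W_def by (simp add: mult_ac)
  also have "\<dots> \<le> W * B"
    using W B by (simp add: mult_le_cancel_left1)
  finally have "\<bar>T (as @ h # hs) - T (as @ h' # hs')\<bar> \<le> real (length hs) * W * B + W * B"
    using step_hs by linarith
  then show ?case
    unfolding W_def by (simp add: algebra_simps)
qed simp

end

section \<open>Hoelder jets\<close>

definition hoelder_jet_on ::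
  "('i \<Rightarrow> real) set \<Rightarrow> (('i \<Rightarrow> real) \<Rightarrow> real) \<Rightarrow> nat \<Rightarrow> real \<Rightarrow> real
    \<Rightarrow> (nat \<Rightarrow> ('i \<Rightarrow> real) \<Rightarrow> ('i \<Rightarrow> real) list \<Rightarrow> real) \<Rightarrow> bool"
  where "hoelder_jet_on V N k \<alpha> M D \<longleftrightarrow>
    (\<forall>j\<le>k. \<forall>y\<in>V. bounded_multilinear_on V N j (D j y))
  \<and> (\<forall>j<k. \<forall>y\<in>V. has_mderiv_at V N j (D j) (D (Suc j) y) y)
  \<and> (\<forall>y\<in>V. \<forall>z\<in>V. mnorm V N k (\<lambda>hs. D k y hs - D k z hs) \<le> M * N (vdiff y z) powr \<alpha>)"

lemma uniformly_H_smooth_iff: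
  "uniformly_H_smooth V N s f \<longleftrightarrow>
    (\<exists>D M. 0 < M \<and> (\<forall>y\<in>V. D 0 y [] = f y)
      \<and> hoelder_jet_on V N (nat (\<lceil>s\<rceil> - 1)) (s - real (nat (\<lceil>s\<rceil> - 1))) M D)"
  unfolding uniformly_H_smooth_def hoelder_jet_on_def Let_def by blast

locale linear_contraction = quasinormed_space V N
  for V :: "('i \<Rightarrow> real) set" and N +
  fixes W :: "('j \<Rightarrow> real) set" and N' :: "('j \<Rightarrow> real) \<Rightarrow> real" and P :: "('i \<Rightarrow> real) \<Rightarrow> 'j \<Rightarrow> real"
  assumes maps_into: "h \<in> V \<Longrightarrow> P h \<in> W"
    and P_vadd: "P (vadd x y) = vadd (P x) (P y)"
    and P_vscale: "P (vscale c x) = vscale c (P x)"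
    and N'_nonneg: "w \<in> W \<Longrightarrow> 0 \<le> N' w"
    and N'_le: "h \<in> V \<Longrightarrow> N' (P h) \<le> N h"
begin

lemma P_vdiff: "P (vdiff x y) = vdiff (P x) (P y)"
proof -
  have "vdiff x y = vadd x (vscale (-1) y)" "vdiff (P x) (P y) = vadd (P x) (vscale (-1) (P y))"
    by (simp_all add: fun_eq_iff vadd_def vdiff_def vscale_def)
  then show ?thesis
    by (simp add: P_vadd P_vscale)
qed

lemma bounded_multilinear_on_comp:
  assumes "bounded_multilinear_on W N' j T"
  shows "bounded_multilinear_on V N j (\<lambda>hs. T (map P hs))"
proof -
  obtain C where C: "mbound W N' j T C" and ml: "multilinear_on W j T"
    using assms unfolding bounded_multilinear_on_iff by blast
  have "multilinear_on V j (\<lambda>hs. T (map P hs))"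
    unfolding multilinear_on_def
  proof (intro allI impI)
    fix as bs x y a b
    assume "length as + length bs + 1 = j \<and> set as \<subseteq> V \<and> set bs \<subseteq> V \<and> x \<in> V \<and> y \<in> V"
    then show "T (map P (as @ vadd (vscale a x) (vscale b y) # bs))
        = a * T (map P (as @ x # bs)) + b * T (map P (as @ y # bs))"
      using ml[unfolded multilinear_on_def, rule_format, of "map P as" "map P bs" "P x" "P y" a b] maps_into
      by (auto simp: P_vadd P_vscale)
  qed
  moreover have "mbound V N j (\<lambda>hs. T (map P hs)) \<bar>C\<bar>"
  proof (rule mboundI)
    fix hs assume hs: "length hs = j" "set hs \<subseteq> V"
    have "\<bar>T (map P hs)\<bar> \<le> C * prod_list (map N' (map P hs))"
      using mboundD[OF C, of "map P hs"] hs maps_into by auto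
    also have "\<dots> \<le> \<bar>C\<bar> * prod_list (map N' (map P hs))"
      using hs maps_into N'_nonneg by (intro mult_right_mono prod_list_map_nonneg) auto
    also have "\<dots> \<le> \<bar>C\<bar> * prod_list (map N hs)"
      using hs maps_into N'_nonneg N'_le
      by (auto simp: comp_def intro!: mult_left_mono prod_list_map_mono)
    finally show "\<bar>T (map P hs)\<bar> \<le> \<bar>C\<bar> * prod_list (map N hs)" .
  qed
  ultimately show ?thesis
    unfolding bounded_multilinear_on_iff by blast
qed

lemma mnorm_comp_le:
  assumes "bounded_multilinear_on W N' j T"
  shows "mnorm V N j (\<lambda>hs. T (map P hs)) \<le> mnorm W N' j T"
proof -
  obtain C where "mbound W N' j T C"
    using assms unfolding bounded_multilinear_on_iff by blast
  then show ?thesis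
    using N'_nonneg zero_in N_zero maps_into N'_le by (intro mnorm_map_le) force+
qed

lemma has_mderiv_at_comp:
  assumes bml: "\<And>z. z \<in> W \<Longrightarrow> bounded_multilinear_on W N' j (D z)" "bounded_multilinear_on W N' (Suc j) D'"
    and der: "has_mderiv_at W N' j D D' (P y)" and y: "y \<in> V"
  shows "has_mderiv_at V N j (\<lambda>y hs. D (P y) (map P hs)) (\<lambda>hs. D' (map P hs)) y"
  unfolding has_mderiv_at_def
proof (intro allI impI)
  fix \<epsilon> :: real assume "0 < \<epsilon>"
  then obtain \<delta> where "0 < \<delta>" and \<delta>: "\<And>h. h \<in> W \<Longrightarrow> N' h < \<delta> \<Longrightarrow>
      mnorm W N' j (\<lambda>hs. D (vadd (P y) h) hs - D (P y) hs - D' (h # hs)) \<le> \<epsilon> * N' h"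
    using der unfolding has_mderiv_at_def by blast
  have "mnorm V N j (\<lambda>hs. D (P (vadd y h)) (map P hs) - D (P y) (map P hs) - D' (map P (h # hs))) \<le> \<epsilon> * N h"
    if h: "h \<in> V" "N h < \<delta>" for h
  proof -
    let ?T = "\<lambda>hs. D (vadd (P y) (P h)) hs - D (P y) hs - D' (P h # hs)"
    have "bounded_multilinear_on W N' j ?T"
      using y h maps_into add_in[OF y h(1)]
      by (intro bounded_multilinear_on_diff bounded_multilinear_on_Cons bml) (auto simp flip: P_vadd)
    then have "mnorm V N j (\<lambda>hs. ?T (map P hs)) \<le> mnorm W N' j ?T"
      by (rule mnorm_comp_le)
    also have "\<dots> \<le> \<epsilon> * N' (P h)"
      using h N'_le[OF h(1)] maps_into by (intro \<delta>) auto
    also have "\<dots> \<le> \<epsilon> * N h"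
      using N'_le[OF h(1)] \<open>0 < \<epsilon>\<close> by simp
    finally show ?thesis
      by (simp add: P_vadd)
  qed
  then show "\<exists>\<delta>>0. \<forall>h\<in>V. N h < \<delta> \<longrightarrow>
      mnorm V N j (\<lambda>hs. D (P (vadd y h)) (map P hs) - D (P y) (map P hs) - D' (map P (h # hs))) \<le> \<epsilon> * N h"
    using \<open>0 < \<delta>\<close> by blast
qed

lemma hoelder_jet_on_comp:
  assumes jet: "hoelder_jet_on W N' k \<alpha> M D" and "0 \<le> \<alpha>" "0 \<le> M"
  shows "hoelder_jet_on V N k \<alpha> M (\<lambda>j y hs. D j (P y) (map P hs))"
  unfolding hoelder_jet_on_def
proof (intro conjI allI impI ballI)
  have bml: "\<And>j y. j \<le> k \<Longrightarrow> y \<in> W \<Longrightarrow> bounded_multilinear_on W N' j (D j y)"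
    and der: "\<And>j y. j < k \<Longrightarrow> y \<in> W \<Longrightarrow> has_mderiv_at W N' j (D j) (D (Suc j) y) y"
    and hoelder: "\<And>y z. y \<in> W \<Longrightarrow> z \<in> W \<Longrightarrow> mnorm W N' k (\<lambda>hs. D k y hs - D k z hs) \<le> M * N' (vdiff y z) powr \<alpha>"
    using jet unfolding hoelder_jet_on_def by auto
  show "bounded_multilinear_on V N j (\<lambda>hs. D j (P y) (map P hs))" if "j \<le> k" "y \<in> V" for j y
    using that maps_into by (intro bounded_multilinear_on_comp bml)
  show "has_mderiv_at V N j (\<lambda>y hs. D j (P y) (map P hs)) (\<lambda>hs. D (Suc j) (P y) (map P hs)) y"
    if "j < k" "y \<in> V" for j y
    using that maps_into by (intro has_mderiv_at_comp bml der) auto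
  show "mnorm V N k (\<lambda>hs. D k (P y) (map P hs) - D k (P z) (map P hs)) \<le> M * N (vdiff y z) powr \<alpha>"
    if y: "y \<in> V" and z: "z \<in> V" for y z
  proof -
    have "mnorm V N k (\<lambda>hs. D k (P y) (map P hs) - D k (P z) (map P hs))
        \<le> mnorm W N' k (\<lambda>hs. D k (P y) hs - D k (P z) hs)"
      using y z maps_into by (intro mnorm_comp_le bounded_multilinear_on_diff bml) auto
    also have "\<dots> \<le> M * N' (P (vdiff y z)) powr \<alpha>"
      using hoelder[OF maps_into[OF y] maps_into[OF z]] by (simp add: P_vdiff)
    also have "\<dots> \<le> M * N (vdiff y z) powr \<alpha>"
      using assms(2,3) N'_le[OF diff_in[OF y z]] N'_nonneg maps_into diff_in[OF y z]
      by (intro mult_left_mono powr_mono2) auto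
    finally show ?thesis .
  qed
qed

end

locale hoelder_jet = quasinormed_space V N for V N +
  fixes k :: nat and \<alpha> M :: real and E :: "nat \<Rightarrow> ('i \<Rightarrow> real) \<Rightarrow> ('i \<Rightarrow> real) list \<Rightarrow> real"
  assumes alpha_pos: "0 < \<alpha>" and alpha_le_one: "\<alpha> \<le> 1" and M_nonneg: "0 \<le> M"
    and jet: "hoelder_jet_on V N k \<alpha> M E"
begin

lemma bounded_multilinear: "j \<le> k \<Longrightarrow> y \<in> V \<Longrightarrow> bounded_multilinear_on V N j (E j y)"
  using jet by (simp add: hoelder_jet_on_def)

lemma multilinear: "j \<le> k \<Longrightarrow> y \<in> V \<Longrightarrow> multilinear_on V j (E j y)"
  using bounded_multilinear by (simp add: bounded_multilinear_on_iff)

lemma hoelder_mbound: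
  assumes "y \<in> V" "z \<in> V"
  shows "mbound V N k (\<lambda>hs. E k y hs - E k z hs) (M * N (vdiff y z) powr \<alpha>)"
  using assms jet bounded_multilinear
  by (intro mbound_of_mnorm_le bounded_multilinear_on_diff) (auto simp: hoelder_jet_on_def)

lemma increment_bound:
  assumes "j < k" "y \<in> V" "u \<in> V" "length hs = j" "set hs \<subseteq> V"
    and G: "\<And>t. 0 \<le> t \<Longrightarrow> t \<le> 1 \<Longrightarrow> mbound V N (Suc j) (\<lambda>gs. E (Suc j) (vadd y (vscale t u)) gs - G gs) C"
  shows "\<bar>E j (vadd y u) hs - E j y hs - G (u # hs)\<bar> \<le> C * N u * prod_list (map N hs)"
proof -
  let ?\<phi> = "\<lambda>t. E j (vadd y (vscale t u)) hs - t * G (u # hs)"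
  have "\<bar>?\<phi> 1 - ?\<phi> 0\<bar> \<le> C * N u * prod_list (map N hs)"
  proof (rule abs_diff_le_of_deriv_bound)
    fix t :: real assume t: "0 \<le> t" "t \<le> 1"
    show "(?\<phi> has_real_derivative E (Suc j) (vadd y (vscale t u)) (u # hs) - 1 * G (u # hs)) (at t)"
      using assms jet bounded_multilinear
      by (intro DERIV_diff DERIV_cmult_right[OF DERIV_ident] has_real_derivative_along_line[where D'="E (Suc j)"])
        (auto simp: hoelder_jet_on_def)
    show "\<bar>E (Suc j) (vadd y (vscale t u)) (u # hs) - 1 * G (u # hs)\<bar> \<le> C * N u * prod_list (map N hs)"
      using mboundD[OF G[OF t], of "u # hs"] assms by (simp add: mult.assoc)
  qed
  moreover have "vadd y (vscale 1 u) = vadd y u" "vadd y (vscale 0 u) = y"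
    by (simp_all add: fun_eq_iff vadd_def vdiff_def vscale_def)
  ultimately show ?thesis
    by (simp add: algebra_simps)
qed

lemma increment_mbound:
  assumes "j < k" "y \<in> V" "u \<in> V"
    and "\<And>t. 0 \<le> t \<Longrightarrow> t \<le> 1 \<Longrightarrow> mbound V N (Suc j) (E (Suc j) (vadd y (vscale t u))) C"
  shows "mbound V N j (\<lambda>hs. E j (vadd y u) hs - E j y hs) (C * N u)"
proof (rule mboundI)
  fix hs assume "length hs = j" "set hs \<subseteq> V"
  then have "\<bar>E j (vadd y u) hs - E j y hs - 0\<bar> \<le> C * N u * prod_list (map N hs)"
    using assms by (intro increment_bound[where G="\<lambda>_. 0"]) auto
  then show "\<bar>E j (vadd y u) hs - E j y hs\<bar> \<le> C * N u * prod_list (map N hs)"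
    by simp
qed

lemma mbound_top_near:
  assumes y: "y \<in> V" and b: "0 \<le> b" "mbound V N k (E k y) b"
    and a: "0 \<le> a" and u: "u \<in> V" "N u \<le> a"
  shows "mbound V N k (E k (vadd y u)) ((b + M) * (1 + a))"
proof -
  have "vdiff (vadd y u) y = u"
    by (simp add: fun_eq_iff vadd_def vdiff_def)
  then have "mbound V N k (\<lambda>hs. E k (vadd y u) hs - E k y hs) (M * N u powr \<alpha>)"
    using hoelder_mbound[OF add_in[OF y u(1)] y] by simp
  then have "mbound V N k (E k (vadd y u)) (M * N u powr \<alpha> + b)"
    using b(2) by (rule mbound_of_mbound_diff)
  moreover have "M * N u powr \<alpha> + b \<le> (b + M) * (1 + a)"
  proof -
    have "N u powr \<alpha> \<le> 1 + a"
      using u N_nonneg alpha_pos alpha_le_one a powr_mono2[of \<alpha> "N u" a] powr_le_one_plus[of a \<alpha>] by force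
    then have "M * N u powr \<alpha> \<le> M * (1 + a)"
      using M_nonneg by (rule mult_left_mono)
    moreover have "b * 1 \<le> b * (1 + a)"
      using b(1) a by (intro mult_left_mono) auto
    ultimately show ?thesis
      by (simp add: algebra_simps)
  qed
  ultimately show ?thesis
    using N_nonneg by (elim mbound_mono) auto
qed

lemma mbound_on_ball:
  assumes y: "y \<in> V" and b: "0 \<le> b" "\<And>j. j \<le> k \<Longrightarrow> mbound V N j (E j y) b"
    and a: "0 \<le> a" and u: "u \<in> V" "N u \<le> a" and j: "j \<le> k"
  shows "mbound V N j (E j (vadd y u)) ((b + M) * (1 + a) ^ (k + 1))"
proof -
  have "\<forall>u. u \<in> V \<and> N u \<le> a \<longrightarrow> mbound V N j (E j (vadd y u)) ((b + M) * (1 + a) ^ (k - j + 1))"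
    using j
  proof (induction j rule: inc_induct)
    case base
    show ?case
      using mbound_top_near[OF y b(1) b(2)[OF order_refl] a] by simp
  next
    case (step n)
    define B where "B = (b + M) * (1 + a) ^ (k - Suc n + 1)"
    have "(b + M) * 1 \<le> B"
      unfolding B_def using b(1) a M_nonneg by (intro mult_left_mono one_le_power) auto
    then have "b \<le> B"
      using M_nonneg by simp
    have "(b + M) * (1 + a) ^ (k - n + 1) = B + B * a"
      unfolding B_def using step.hyps by (simp add: Suc_diff_Suc algebra_simps)
    show ?case
    proof (intro allI impI)
      fix u assume u: "u \<in> V \<and> N u \<le> a"
      have "mbound V N n (\<lambda>hs. E n (vadd y u) hs - E n y hs) (B * N u)"
      proof (rule increment_mbound)
        fix t :: real assume "0 \<le> t" "t \<le> 1"
        then have "N (vscale t u) \<le> a"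
          using u N_scale_le[of u t] by simp
        then show "mbound V N (Suc n) (E (Suc n) (vadd y (vscale t u))) B"
          using step.IH u scale_in unfolding B_def by blast
      qed (use step.hyps y u in auto)
      then have "mbound V N n (E n (vadd y u)) (B * N u + b)"
        using b(2) step.hyps by (intro mbound_of_mbound_diff) auto
      moreover have "B * N u \<le> B * a"
        using u \<open>b \<le> B\<close> b(1) by (intro mult_left_mono) auto
      ultimately show "mbound V N n (E n (vadd y u)) ((b + M) * (1 + a) ^ (k - n + 1))"
        unfolding \<open>(b + M) * (1 + a) ^ (k - n + 1) = B + B * a\<close> using \<open>b \<le> B\<close> N_nonneg
        by (elim mbound_mono) auto
    qed
  qed
  then have "mbound V N j (E j (vadd y u)) ((b + M) * (1 + a) ^ (k - j + 1))"
    using u by blast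
  then show ?thesis
    using b(1) M_nonneg a j N_nonneg
    by (elim mbound_mono) (auto intro!: mult_left_mono power_increasing)
qed

lemma hoelder_continuity:
  assumes y: "y \<in> V" and b: "0 \<le> b" "\<And>j. j \<le> k \<Longrightarrow> mbound V N j (E j y) b"
    and w: "w \<in> V" "N w \<le> 1" and j: "j \<le> k"
  shows "mbound V N j (\<lambda>hs. E j (vadd y w) hs - E j y hs) ((M + (b + M) * 2 ^ (k + 1)) * N w powr \<alpha>)"
proof (cases "j = k")
  case True
  have "vdiff (vadd y w) y = w"
    by (simp add: fun_eq_iff vadd_def vdiff_def vscale_def)
  then have "mbound V N j (\<lambda>hs. E j (vadd y w) hs - E j y hs) (M * N w powr \<alpha>)"
    using hoelder_mbound[OF add_in[OF y w(1)] y] True by simp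
  then show ?thesis
    using b(1) M_nonneg N_nonneg by (elim mbound_mono) (auto intro!: mult_right_mono)
next
  case False
  define C where "C = (b + M) * 2 ^ (k + 1)"
  have C: "0 \<le> C"
    unfolding C_def using b(1) M_nonneg by simp
  show ?thesis
  proof (rule mboundI)
    fix hs assume hs: "length hs = j" "set hs \<subseteq> V"
    have "\<bar>E j (vadd y w) hs - E j y hs - 0\<bar> \<le> C * N w * prod_list (map N hs)"
    proof (rule increment_bound[where G="\<lambda>_. 0"])
      fix t :: real assume "0 \<le> t" "t \<le> 1"
      then have "N (vscale t w) \<le> 1"
        using w N_scale_le[of w t] by simp
      then have "mbound V N (Suc j) (E (Suc j) (vadd y (vscale t w))) C"
        unfolding C_def using mbound_on_ball[OF y b, of 1 "vscale t w" "Suc j"] j False scale_in w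
        by (simp add: one_add_one)
      then show "mbound V N (Suc j) (\<lambda>gs. E (Suc j) (vadd y (vscale t w)) gs - 0) C"
        by simp
    qed (use j False y w hs in auto)
    also have "\<dots> \<le> (M + C) * N w powr \<alpha> * prod_list (map N hs)"
    proof (intro mult_right_mono prod_list_N_nonneg[OF hs(2)])
      have "C * N w \<le> C * N w powr \<alpha>"
        using C w N_nonneg alpha_le_one by (intro mult_left_mono le_powr_of_le_one) auto
      also have "\<dots> \<le> (M + C) * N w powr \<alpha>"
        using M_nonneg by (intro mult_right_mono) auto
      finally show "C * N w \<le> (M + C) * N w powr \<alpha>" .
    qed
    finally show "\<bar>E j (vadd y w) hs - E j y hs\<bar> \<le> (M + (b + M) * 2 ^ (k + 1)) * N w powr \<alpha> * prod_list (map N hs)"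
      unfolding C_def by simp
  qed
qed

lemma remainder_bound:
  assumes j: "j < k" and y: "y \<in> V" and b: "0 \<le> b" "\<And>j. j \<le> k \<Longrightarrow> mbound V N j (E j y) b"
    and h: "h \<in> V" "N h \<le> 1"
  shows "mbound V N j (\<lambda>hs. E j (vadd y h) hs - E j y hs - E (Suc j) y (h # hs))
    ((M + (b + M) * 2 ^ (k + 1)) * N h powr \<alpha> * N h)"
proof (rule mboundI)
  define K where "K = M + (b + M) * 2 ^ (k + 1)"
  have K: "0 \<le> K"
    unfolding K_def using b(1) M_nonneg by simp
  fix hs assume hs: "length hs = j" "set hs \<subseteq> V"
  have "\<bar>E j (vadd y h) hs - E j y hs - E (Suc j) y (h # hs)\<bar> \<le> K * N h powr \<alpha> * N h * prod_list (map N hs)"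
  proof (rule increment_bound)
    fix t :: real assume "0 \<le> t" "t \<le> 1"
    then have "N (vscale t h) \<le> N h"
      using h N_scale_le[of h t] by simp
    then have "K * N (vscale t h) powr \<alpha> \<le> K * N h powr \<alpha>"
      using K N_nonneg scale_in h alpha_pos by (intro mult_left_mono powr_mono2) auto
    moreover have "mbound V N (Suc j) (\<lambda>gs. E (Suc j) (vadd y (vscale t h)) gs - E (Suc j) y gs)
        (K * N (vscale t h) powr \<alpha>)"
      unfolding K_def using h j scale_in \<open>N (vscale t h) \<le> N h\<close> by (intro hoelder_continuity[OF y b]) auto
    ultimately show "mbound V N (Suc j) (\<lambda>gs. E (Suc j) (vadd y (vscale t h)) gs - E (Suc j) y gs) (K * N h powr \<alpha>)"
      using N_nonneg by (elim mbound_mono) auto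
  qed (use j y h hs in auto)
  then show "\<bar>E j (vadd y h) hs - E j y hs - E (Suc j) y (h # hs)\<bar>
      \<le> (M + (b + M) * 2 ^ (k + 1)) * N h powr \<alpha> * N h * prod_list (map N hs)"
    unfolding K_def .
qed

end

section \<open>Compactness of bounded families of Hoelder jets\<close>

lemma diagonal_subseq_convergent:
  fixes f :: "'a \<Rightarrow> nat \<Rightarrow> 'b::heine_borel"
  assumes "countable I" and bounded: "\<And>i. i \<in> I \<Longrightarrow> bounded (range (f i))"
  obtains s where "strict_mono s" "\<And>i. i \<in> I \<Longrightarrow> convergent (\<lambda>m. f i (s m))"
proof (cases "I = {}")
  case True
  then show ?thesis
    using that[OF strict_mono_id] by simp
next
  case False
  define g where "g n = f (from_nat_into I n)" for n
  have g_bounded: "bounded (range (g n))" for n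
    unfolding g_def using bounded from_nat_into[OF False] by blast
  interpret subseqs "\<lambda>n s. convergent (\<lambda>m. g n (s m))"
  proof
    fix n and s :: "nat \<Rightarrow> nat"
    have "bounded (range (\<lambda>m. g n (s m)))"
      using g_bounded by (rule bounded_subset) auto
    then obtain l r where "strict_mono r" "((\<lambda>m. g n (s m)) \<circ> r) \<longlonglongrightarrow> l"
      using bounded_imp_convergent_subsequence by blast
    then show "\<exists>r. strict_mono r \<and> convergent (\<lambda>m. g n ((s \<circ> r) m))"
      by (auto simp: convergent_def comp_def)
  qed
  have conv: "convergent (\<lambda>m. g n (diagseq m))" for n
  proof -
    have "convergent (\<lambda>m. g n ((diagseq \<circ> (+) (Suc n)) m))"
      by (rule diagseq_holds) (use convergent_subseq_convergent in \<open>auto simp: comp_def\<close>)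
    then show ?thesis
      using convergent_ignore_initial_segment[of "\<lambda>m. g n (diagseq m)" "Suc n"] by (simp add: add.commute)
  qed
  show ?thesis
  proof (rule that[OF subseq_diagseq])
    fix i assume "i \<in> I"
    then obtain n where "from_nat_into I n = i"
      using from_nat_into_surj[OF assms(1)] by blast
    then show "convergent (\<lambda>m. f i (diagseq m))"
      using conv[of n] unfolding g_def by simp
  qed
qed

locale hoelder_jet_family = quasinormed_space V N for V N +
  fixes k :: nat and \<alpha> M c :: real
    and E :: "nat \<Rightarrow> nat \<Rightarrow> ('i \<Rightarrow> real) \<Rightarrow> ('i \<Rightarrow> real) list \<Rightarrow> real"
  assumes member: "hoelder_jet V N k \<alpha> M (E n)"
    and bounded_at_zero: "j \<le> k \<Longrightarrow> mnorm V N j (E n j (\<lambda>_. 0)) \<le> c"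
begin

lemma alpha_pos: "0 < \<alpha>" and alpha_le_one: "\<alpha> \<le> 1" and M_nonneg: "0 \<le> M"
  using hoelder_jet.alpha_pos[OF member] hoelder_jet.alpha_le_one[OF member]
    hoelder_jet.M_nonneg[OF member] by auto

lemma c_nonneg: "0 \<le> c"
proof -
  have "mbound V N 0 (E 0 0 (\<lambda>_. 0)) (mnorm V N 0 (E 0 0 (\<lambda>_. 0)))"
    using hoelder_jet.bounded_multilinear[OF member] zero_in by (intro mbound_mnorm) auto
  then have "\<bar>E 0 0 (\<lambda>_. 0) []\<bar> \<le> mnorm V N 0 (E 0 0 (\<lambda>_. 0))"
    using N_nonneg by (intro mnorm_upper) auto
  then show ?thesis
    using bounded_at_zero[of 0 0] by linarith
qed

text \<open>\<open>local_bound y\<close> bounds the jets at \<open>y\<close> (by \<open>mbound_on_ball\<close> around \<open>0\<close>), and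
  \<open>jet_const y\<close> is the constant that \<open>mbound_on_ball\<close>, \<open>hoelder_continuity\<close> and
  \<open>remainder_bound\<close> derive from it on the unit ball around \<open>y\<close>.\<close>

definition local_bound :: "('i \<Rightarrow> real) \<Rightarrow> real"
  where "local_bound y = (c + M) * (1 + N y) ^ (k + 1)"

definition jet_const :: "('i \<Rightarrow> real) \<Rightarrow> real"
  where "jet_const y = M + (local_bound y + M) * 2 ^ (k + 1)"

lemma local_bound_nonneg: "y \<in> V \<Longrightarrow> 0 \<le> local_bound y"
  unfolding local_bound_def using c_nonneg M_nonneg N_nonneg by simp

lemma local_bound_le_jet_const: "y \<in> V \<Longrightarrow> local_bound y \<le> jet_const y"
proof -
  assume "y \<in> V"
  then have "local_bound y * 1 \<le> (local_bound y + M) * 2 ^ (k + 1)"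
    using local_bound_nonneg M_nonneg one_le_power[of "2::real" "k + 1"] by (intro mult_mono) auto
  then show ?thesis
    unfolding jet_const_def using M_nonneg by simp
qed

lemma jet_const_nonneg: "y \<in> V \<Longrightarrow> 0 \<le> jet_const y"
  using local_bound_nonneg local_bound_le_jet_const by fastforce

lemma uniform_local_bound:
  assumes "j \<le> k" "y \<in> V"
  shows "mbound V N j (E n j y) (local_bound y)"
proof -
  have "mbound V N j (E n j (\<lambda>_. 0)) c" if "j \<le> k" for j
    using that bounded_at_zero hoelder_jet.bounded_multilinear[OF member] zero_in
    by (intro mbound_of_mnorm_le) auto
  then have "mbound V N j (E n j (vadd (\<lambda>_. 0) y)) (local_bound y)"
    unfolding local_bound_def using assms c_nonneg N_nonneg
    by (intro hoelder_jet.mbound_on_ball[OF member zero_in]) auto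
  moreover have "vadd (\<lambda>_. 0) y = y"
    by (simp add: fun_eq_iff vadd_def vdiff_def vscale_def)
  ultimately show ?thesis
    by simp
qed

lemma uniform_ball_bound:
  assumes "j \<le> k" "y \<in> V" "w \<in> V" "N w \<le> 1"
  shows "mbound V N j (E n j (vadd y w)) (jet_const y)"
proof -
  have "mbound V N j (E n j (vadd y w)) ((local_bound y + M) * (1 + 1) ^ (k + 1))"
    using assms uniform_local_bound local_bound_nonneg
    by (intro hoelder_jet.mbound_on_ball[OF member]) auto
  then show ?thesis
    unfolding jet_const_def using M_nonneg N_nonneg by (elim mbound_mono) auto
qed

lemma uniform_hoelder_continuity:
  assumes "j \<le> k" "y \<in> V" "w \<in> V" "N w \<le> 1"
  shows "mbound V N j (\<lambda>hs. E n j (vadd y w) hs - E n j y hs) (jet_const y * N w powr \<alpha>)"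
  unfolding jet_const_def using assms uniform_local_bound local_bound_nonneg
  by (intro hoelder_jet.hoelder_continuity[OF member]) auto

lemma uniform_remainder_bound:
  assumes "j < k" "y \<in> V" "h \<in> V" "N h \<le> 1"
  shows "mbound V N j (\<lambda>hs. E n j (vadd y h) hs - E n j y hs - E n (Suc j) y (h # hs))
    (jet_const y * N h powr \<alpha> * N h)"
  unfolding jet_const_def using assms uniform_local_bound local_bound_nonneg
  by (intro hoelder_jet.remainder_bound[OF member]) auto

lemma uniform_approximation:
  assumes j: "j \<le> k" and y: "y \<in> V" "y' \<in> V" and \<eta>: "0 < \<eta>" "\<eta> \<le> 1" "N (vdiff y y') < \<eta>"
    and hs: "length hs = j" "set hs \<subseteq> V" "set hs' \<subseteq> V"
    and close: "list_all2 (\<lambda>h h'. N h \<le> B \<and> N h' \<le> B \<and> N (vdiff h h') \<le> \<eta>) hs hs'" and B: "1 \<le> B"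
  shows "\<bar>E n j y hs - E n j y' hs'\<bar> \<le> jet_const y * (prod_list (map N hs) + real j * B ^ j) * \<eta> powr \<alpha>"
proof -
  define w where "w = vdiff y' y"
  have w: "w \<in> V" "N w < \<eta>"
    unfolding w_def using y diff_in \<eta> N_vdiff_commute by auto
  have yw: "vadd y w = y'"
    unfolding w_def by (simp add: fun_eq_iff vadd_def vdiff_def)
  have K: "0 \<le> jet_const y"
    using jet_const_nonneg[OF y(1)] .
  have "\<bar>E n j y' hs - E n j y hs\<bar> \<le> jet_const y * N w powr \<alpha> * prod_list (map N hs)"
    using mboundD[OF uniform_hoelder_continuity[OF j y(1) w(1)] hs(1,2)] w yw \<eta> by simp
  also have "\<dots> \<le> jet_const y * \<eta> powr \<alpha> * prod_list (map N hs)"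
    using K w N_nonneg alpha_pos prod_list_N_nonneg[OF hs(2)]
    by (intro mult_right_mono mult_left_mono powr_mono2) auto
  finally have approx_point: "\<bar>E n j y' hs - E n j y hs\<bar> \<le> jet_const y * \<eta> powr \<alpha> * prod_list (map N hs)" .
  have "\<bar>E n j y' ([] @ hs) - E n j y' ([] @ hs')\<bar> \<le> real (length hs) * jet_const y * prod_list (map N []) * B ^ length hs * \<eta>"
    using close hs B \<eta> K y w yw uniform_ball_bound[OF j y(1) w(1)] hoelder_jet.multilinear[OF member j]
    by (intro multilinear_on_perturb_args) auto
  also have "\<dots> \<le> real j * jet_const y * B ^ j * \<eta> powr \<alpha>"
    using hs K B \<eta> alpha_le_one le_powr_of_le_one[of \<eta> \<alpha>] by (simp add: mult_left_mono)
  finally have approx_args: "\<bar>E n j y' hs - E n j y' hs'\<bar> \<le> real j * jet_const y * B ^ j * \<eta> powr \<alpha>"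
    by simp
  show ?thesis
    using approx_point approx_args by (simp add: algebra_simps)
qed

lemma convergent_of_convergent_on_dense:
  assumes Q: "Q \<subseteq> V" "\<And>y e. y \<in> V \<Longrightarrow> 0 < e \<Longrightarrow> \<exists>y'\<in>Q. N (vdiff y y') < e"
    and conv: "\<And>j y hs. j \<le> k \<Longrightarrow> y \<in> Q \<Longrightarrow> set hs \<subseteq> Q \<Longrightarrow> length hs = j \<Longrightarrow>
      convergent (\<lambda>m. E (s m) j y hs)"
    and j: "j \<le> k" and y: "y \<in> V" and hs: "length hs = j" "set hs \<subseteq> V"
  shows "convergent (\<lambda>m. E (s m) j y hs)"
proof (rule Cauchy_convergent, rule CauchyI)
  fix e :: real assume "0 < e"
  define B where "B = 4 * (sum_list (map N hs) + 1)"
  define A where "A = jet_const y * (prod_list (map N hs) + real j * B ^ j)"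
  have "0 \<le> sum_list (map N hs)"
    using hs N_nonneg by (intro sum_list_nonneg) auto
  then have B: "1 \<le> B"
    unfolding B_def by simp
  have "0 \<le> A"
    unfolding A_def using jet_const_nonneg[OF y] prod_list_N_nonneg[OF hs(2)] B by simp
  then obtain \<eta> where \<eta>: "0 < \<eta>" "\<eta> \<le> 1" "A * \<eta> powr \<alpha> < e / 3"
    using exists_small_powr_le[of A \<alpha> "e / 3"] alpha_pos \<open>0 < e\<close> by auto
  obtain y' where y': "y' \<in> Q" "N (vdiff y y') < \<eta>"
    using Q(2)[OF y \<eta>(1)] by blast
  obtain hs' where hs': "set hs' \<subseteq> Q"
    and close: "list_all2 (\<lambda>h h'. N h \<le> B \<and> N h' \<le> B \<and> N (vdiff h h') \<le> \<eta>) hs hs'"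
    unfolding B_def by (rule dense_approx_args[OF Q hs(2) \<eta>(1,2)])
  have approx: "\<bar>E n j y hs - E n j y' hs'\<bar> < e / 3" for n
    using uniform_approximation[OF j y _ \<eta>(1,2) y'(2) hs _ close B, of n] y' hs' Q(1) \<eta>(3)
    unfolding A_def by fastforce
  have "Cauchy (\<lambda>m. E (s m) j y' hs')"
    using conv[of j y' hs'] j y' hs' list_all2_lengthD[OF close] hs by (intro convergent_Cauchy) auto
  then obtain M0 where M0: "\<And>m n. M0 \<le> m \<Longrightarrow> M0 \<le> n \<Longrightarrow> norm (E (s m) j y' hs' - E (s n) j y' hs') < e / 3"
    using CauchyD[of _ "e / 3"] \<open>0 < e\<close> by (metis zero_less_divide_iff zero_less_numeral)
  show "\<exists>M. \<forall>m\<ge>M. \<forall>n\<ge>M. norm (E (s m) j y hs - E (s n) j y hs) < e"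
  proof (intro exI allI impI)
    fix m n assume "M0 \<le> m" "M0 \<le> n"
    then show "norm (E (s m) j y hs - E (s n) j y hs) < e"
      using M0[of m n] approx[of "s m"] approx[of "s n"] unfolding real_norm_def by linarith
  qed
qed

context
  fixes s :: "nat \<Rightarrow> nat" and D :: "nat \<Rightarrow> ('i \<Rightarrow> real) \<Rightarrow> ('i \<Rightarrow> real) list \<Rightarrow> real"
  assumes lim: "\<And>j y hs. j \<le> k \<Longrightarrow> y \<in> V \<Longrightarrow> length hs = j \<Longrightarrow> set hs \<subseteq> V \<Longrightarrow>
    (\<lambda>m. E (s m) j y hs) \<longlonglongrightarrow> D j y hs"
begin

lemma limit_bounded_multilinear:
  assumes j: "j \<le> k" and y: "y \<in> V"
  shows "bounded_multilinear_on V N j (D j y)"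
proof -
  have "multilinear_on V j (D j y)"
    by (rule multilinear_on_tendsto[where T="\<lambda>m. E (s m) j y"])
      (use j y hoelder_jet.multilinear[OF member] add_in scale_in lim in auto)
  moreover have "mbound V N j (D j y) (local_bound y)"
    by (rule mbound_tendsto[where T="\<lambda>m. E (s m) j y"]) (use j y uniform_local_bound lim in auto)
  ultimately show ?thesis
    unfolding bounded_multilinear_on_iff by blast
qed

lemma limit_remainder_bound:
  assumes j: "j < k" and y: "y \<in> V" and h: "h \<in> V" "N h \<le> 1"
  shows "mbound V N j (\<lambda>hs. D j (vadd y h) hs - D j y hs - D (Suc j) y (h # hs)) (jet_const y * N h powr \<alpha> * N h)"
proof (rule mbound_tendsto[where T="\<lambda>m hs. E (s m) j (vadd y h) hs - E (s m) j y hs - E (s m) (Suc j) y (h # hs)"])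
  fix hs assume "length hs = j" "set hs \<subseteq> V"
  then show "(\<lambda>m. E (s m) j (vadd y h) hs - E (s m) j y hs - E (s m) (Suc j) y (h # hs))
      \<longlonglongrightarrow> D j (vadd y h) hs - D j y hs - D (Suc j) y (h # hs)"
    using j y h add_in by (intro tendsto_diff lim) auto
qed (rule uniform_remainder_bound[OF j y h])

lemma limit_has_mderiv_at:
  assumes j: "j < k" and y: "y \<in> V"
  shows "has_mderiv_at V N j (D j) (D (Suc j) y) y"
  unfolding has_mderiv_at_def
proof (intro allI impI)
  fix \<epsilon> :: real assume "0 < \<epsilon>"
  with jet_const_nonneg[OF y] alpha_pos obtain \<delta> where \<delta>: "0 < \<delta>" "\<delta> \<le> 1" "jet_const y * \<delta> powr \<alpha> < \<epsilon>"
    by (rule exists_small_powr_le)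
  have "mnorm V N j (\<lambda>hs. D j (vadd y h) hs - D j y hs - D (Suc j) y (h # hs)) \<le> \<epsilon> * N h"
    if h: "h \<in> V" "N h < \<delta>" for h
  proof -
    have "mnorm V N j (\<lambda>hs. D j (vadd y h) hs - D j y hs - D (Suc j) y (h # hs)) \<le> jet_const y * N h powr \<alpha> * N h"
      using limit_remainder_bound[OF j y h(1)] h \<delta> jet_const_nonneg[OF y] N_nonneg[OF h(1)]
      by (intro mnorm_le_of_mbound) auto
    also have "\<dots> \<le> \<epsilon> * N h"
    proof (intro mult_right_mono N_nonneg[OF h(1)])
      have "jet_const y * N h powr \<alpha> \<le> jet_const y * \<delta> powr \<alpha>"
        using jet_const_nonneg[OF y] N_nonneg[OF h(1)] h alpha_pos by (intro mult_left_mono powr_mono2) auto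
      then show "jet_const y * N h powr \<alpha> \<le> \<epsilon>"
        using \<delta> by linarith
    qed
    finally show ?thesis .
  qed
  then show "\<exists>\<delta>>0. \<forall>h\<in>V. N h < \<delta> \<longrightarrow>
      mnorm V N j (\<lambda>hs. D j (vadd y h) hs - D j y hs - D (Suc j) y (h # hs)) \<le> \<epsilon> * N h"
    using \<delta>(1) by blast
qed

lemma limit_hoelder:
  assumes y: "y \<in> V" and z: "z \<in> V"
  shows "mnorm V N k (\<lambda>hs. D k y hs - D k z hs) \<le> M * N (vdiff y z) powr \<alpha>"
proof -
  have "mbound V N k (\<lambda>hs. D k y hs - D k z hs) (M * N (vdiff y z) powr \<alpha>)"
  proof (rule mbound_tendsto[where T="\<lambda>m hs. E (s m) k y hs - E (s m) k z hs"])
    fix hs assume "length hs = k" "set hs \<subseteq> V"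
    then show "(\<lambda>m. E (s m) k y hs - E (s m) k z hs) \<longlonglongrightarrow> D k y hs - D k z hs"
      using y z by (intro tendsto_diff lim) auto
  qed (rule hoelder_jet.hoelder_mbound[OF member y z])
  then show ?thesis
    using M_nonneg by (intro mnorm_le_of_mbound) auto
qed

lemma hoelder_jet_on_limit: "hoelder_jet_on V N k \<alpha> M D"
  unfolding hoelder_jet_on_def using limit_bounded_multilinear limit_has_mderiv_at limit_hoelder by blast

end

lemma convergent_subsequence:
  assumes Q: "countable Q" "Q \<subseteq> V" "\<And>y e. y \<in> V \<Longrightarrow> 0 < e \<Longrightarrow> \<exists>y'\<in>Q. N (vdiff y y') < e"
  obtains s D where "strict_mono s"
    "\<And>j y hs. j \<le> k \<Longrightarrow> y \<in> V \<Longrightarrow> length hs = j \<Longrightarrow> set hs \<subseteq> V \<Longrightarrow>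
      (\<lambda>m. E (s m) j y hs) \<longlonglongrightarrow> D j y hs"
    "hoelder_jet_on V N k \<alpha> M D"
proof -
  define I where "I = {(j, y, hs). j \<le> k \<and> y \<in> Q \<and> set hs \<subseteq> Q \<and> length hs = j}"
  have "countable I"
    by (rule countable_subset[of _ "{..k} \<times> Q \<times> lists Q"]) (use Q(1) in \<open>auto simp: I_def\<close>)
  define f where "f i m = (case i of (j, y, hs) \<Rightarrow> E m j y hs)" for i m
  have bounded: "bounded (range (f i))" if "i \<in> I" for i
  proof -
    obtain j y hs where i: "i = (j, y, hs)"
      by (cases i) auto
    with \<open>i \<in> I\<close> Q(2) have "j \<le> k" "y \<in> V" "set hs \<subseteq> V" "length hs = j"
      unfolding I_def by auto
    then have "\<bar>f i m\<bar> \<le> local_bound y * prod_list (map N hs)" for m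
      unfolding f_def i using mboundD[OF uniform_local_bound] by auto
    then show ?thesis
      unfolding bounded_real by auto
  qed
  obtain s where s: "strict_mono s" and conv: "\<And>i. i \<in> I \<Longrightarrow> convergent (\<lambda>m. f i (s m))"
  proof (rule diagonal_subseq_convergent[OF \<open>countable I\<close> bounded])
    fix s assume "strict_mono s" "\<And>i. i \<in> I \<Longrightarrow> convergent (\<lambda>m. f i (s m))"
    then show thesis
      by (rule that)
  qed
  define D where "D j y hs = lim (\<lambda>m. E (s m) j y hs)" for j y hs
  have lim: "(\<lambda>m. E (s m) j y hs) \<longlonglongrightarrow> D j y hs"
    if "j \<le> k" "y \<in> V" "length hs = j" "set hs \<subseteq> V" for j y hs
    unfolding D_def convergent_LIMSEQ_iff[symmetric]
  proof (rule convergent_of_convergent_on_dense[OF Q(2,3) _ that])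
    fix j y hs assume "j \<le> k" "y \<in> Q" "set hs \<subseteq> Q" "length hs = j"
    then show "convergent (\<lambda>m. E (s m) j y hs)"
      using conv[of "(j, y, hs)"] unfolding I_def f_def by simp
  qed
  show ?thesis
    using that[OF s lim hoelder_jet_on_limit[OF lim]] .
qed

end

section \<open>The sequence spaces\<close>

lemma abs_add_powr_le:
  fixes a b q :: real
  assumes "0 \<le> q"
  shows "\<bar>a + b\<bar> powr q \<le> 2 powr q * (\<bar>a\<bar> powr q + \<bar>b\<bar> powr q)"
proof -
  define m where "m = max \<bar>a\<bar> \<bar>b\<bar>"
  have "\<bar>a + b\<bar> powr q \<le> (2 * m) powr q"
    unfolding m_def using assms by (intro powr_mono2) auto
  also have "\<dots> = 2 powr q * m powr q"
    unfolding m_def by (simp add: powr_mult)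
  also have "m powr q \<le> \<bar>a\<bar> powr q + \<bar>b\<bar> powr q"
    unfolding m_def by (simp add: max_def)
  finally show ?thesis
    by simp
qed

lemma lq_vadd:
  assumes "0 \<le> q" "x \<in> lq q" "y \<in> lq q"
  shows "vadd x y \<in> lq q"
  unfolding lq_def vadd_def
proof (simp, rule summable_comparison_test')
  show "summable (\<lambda>i. 2 powr q * (\<bar>x i\<bar> powr q + \<bar>y i\<bar> powr q))"
    using assms unfolding lq_def by (intro summable_mult summable_add) auto
  show "norm (\<bar>x i + y i\<bar> powr q) \<le> 2 powr q * (\<bar>x i\<bar> powr q + \<bar>y i\<bar> powr q)" for i
    using abs_add_powr_le[OF assms(1)] by simp
qed

lemma lq_vscale: "x \<in> lq q \<Longrightarrow> vscale c x \<in> lq q"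
  unfolding lq_def using summable_mult[of "\<lambda>i. \<bar>x i\<bar> powr q" "\<bar>c\<bar> powr q"]
  by (simp add: vscale_def abs_mult powr_mult)

lemma lq_norm_vscale:
  assumes "0 < q" "x \<in> lq q"
  shows "lq_norm q (vscale c x) = \<bar>c\<bar> * lq_norm q x"
proof -
  have "(\<Sum>i. \<bar>vscale c x i\<bar> powr q) = \<bar>c\<bar> powr q * (\<Sum>i. \<bar>x i\<bar> powr q)"
    using assms(2) unfolding lq_def by (simp add: vscale_def abs_mult powr_mult suminf_mult)
  moreover have "0 \<le> (\<Sum>i. \<bar>x i\<bar> powr q)"
    using assms(2) unfolding lq_def by (intro suminf_nonneg) auto
  ultimately show ?thesis
    unfolding lq_norm_def using assms(1) by (simp add: powr_mult powr_powr)
qed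

lemma lq_norm_quasi_triangle:
  assumes "1 \<le> q" "x \<in> lq q" "y \<in> lq q"
  shows "lq_norm q (vadd x y) \<le> 4 * (lq_norm q x + lq_norm q y)"
proof -
  define S where "S z = (\<Sum>i. \<bar>z i\<bar> powr q)" for z :: "nat \<Rightarrow> real"
  have sx: "summable (\<lambda>i. \<bar>x i\<bar> powr q)" and sy: "summable (\<lambda>i. \<bar>y i\<bar> powr q)"
    and sxy: "summable (\<lambda>i. \<bar>x i + y i\<bar> powr q)"
    using assms lq_vadd[of q x y] unfolding lq_def vadd_def by auto
  have S0: "0 \<le> S x" "0 \<le> S y" "0 \<le> S (\<lambda>i. x i + y i)"
    unfolding S_def using sx sy sxy by (auto intro!: suminf_nonneg)
  have "S (\<lambda>i. x i + y i) \<le> (\<Sum>i. 2 powr q * (\<bar>x i\<bar> powr q + \<bar>y i\<bar> powr q))"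
    unfolding S_def using abs_add_powr_le[of q] assms(1) sxy sx sy
    by (intro suminf_le summable_mult summable_add) auto
  also have "\<dots> = 2 powr q * (S x + S y)"
    unfolding S_def using sx sy by (simp add: suminf_mult suminf_add summable_add)
  also have "\<dots> \<le> 2 powr q * (2 * max (S x) (S y))"
    by (intro mult_left_mono) auto
  finally have "S (\<lambda>i. x i + y i) powr (1 / q) \<le> (2 powr q * (2 * max (S x) (S y))) powr (1 / q)"
    using S0 assms(1) by (intro powr_mono2) auto
  also have "\<dots> = 2 * 2 powr (1 / q) * max (S x) (S y) powr (1 / q)"
    using S0 assms(1) by (simp add: powr_mult powr_powr)
  also have "\<dots> \<le> 2 * 2 * (S x powr (1 / q) + S y powr (1 / q))"
  proof (rule mult_mono)
    show "2 * 2 powr (1 / q) \<le> 2 * 2"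
      using assms(1) powr_mono[of "1 / q" 1 2] by simp
    show "max (S x) (S y) powr (1 / q) \<le> S x powr (1 / q) + S y powr (1 / q)"
      by (simp add: max_def)
  qed auto
  finally show ?thesis
    unfolding lq_norm_def S_def vadd_def by simp
qed

lemma quasinormed_space_lq:
  assumes "1 \<le> q"
  shows "quasinormed_space (lq q) (lq_norm q)"
proof
  show "(\<lambda>_. 0) \<in> lq q"
    by (simp add: lq_def)
  show "0 \<le> lq_norm q x" for x
    by (simp add: lq_norm_def)
qed (use assms lq_vadd lq_vscale lq_norm_vscale lq_norm_quasi_triangle in auto)

definition rat_seq :: "rat list \<Rightarrow> nat \<Rightarrow> real"
  where "rat_seq xs i = (if i < length xs then of_rat (xs ! i) else 0)"

lemma rat_seq_in_lq: "rat_seq xs \<in> lq q"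
  unfolding lq_def mem_Collect_eq by (rule summable_finite[of "{..<length xs}"]) (auto simp: rat_seq_def)

lemma exists_rat_approx:
  fixes y :: "nat \<Rightarrow> real"
  assumes "0 < \<delta>"
  shows "\<exists>r :: nat \<Rightarrow> rat. \<forall>i. \<bar>y i - of_rat (r i)\<bar> < \<delta>"
proof -
  have "\<exists>r::rat. \<bar>y i - of_rat r\<bar> < \<delta>" for i
  proof -
    obtain x where "x \<in> \<rat>" "y i - \<delta> < x" "x < y i + \<delta>"
      using Rats_dense_in_real[of "y i - \<delta>" "y i + \<delta>"] assms by auto
    moreover from \<open>x \<in> \<rat>\<close> obtain r where "x = of_rat r"
      by (auto elim: Rats_cases)
    ultimately show ?thesis
      by (intro exI[of _ r]) auto
  qed
  then show ?thesis
    by metis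
qed

lemma lq_rat_seq_dense:
  assumes q: "0 < q" and y: "y \<in> lq q" and e: "0 < e"
  shows "\<exists>xs. lq_norm q (vdiff y (rat_seq xs)) < e"
proof -
  define t where "t = e powr q"
  have "0 < t"
    unfolding t_def using e by simp
  have sy: "summable (\<lambda>i. \<bar>y i\<bar> powr q)"
    using y unfolding lq_def by auto
  obtain n where tail: "norm (\<Sum>i. \<bar>y (i + n)\<bar> powr q) < t / 2"
    using suminf_exist_split[of "t / 2" "\<lambda>i. \<bar>y i\<bar> powr q"] \<open>0 < t\<close> sy by auto
  define \<delta> where "\<delta> = (t / (2 * (real n + 1))) powr (1 / q)"
  have "0 < \<delta>"
    unfolding \<delta>_def using \<open>0 < t\<close> by simp
  then obtain r where r: "\<And>i. \<bar>y i - of_rat (r i)\<bar> < \<delta>"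
    using exists_rat_approx[of \<delta> y] by blast
  define d where "d = vdiff y (rat_seq (map r [0..<n]))"
  have d_tail: "d (i + n) = y (i + n)" for i
    unfolding d_def rat_seq_def by (simp add: vdiff_def)
  have d_head: "\<bar>d i\<bar> < \<delta>" if "i < n" for i
    unfolding d_def rat_seq_def using r[of i] that by (simp add: vdiff_def)
  have "summable (\<lambda>i. \<bar>d (i + n)\<bar> powr q)"
    unfolding d_tail using sy summable_iff_shift[of "\<lambda>i. \<bar>y i\<bar> powr q" n] by simp
  then have sd: "summable (\<lambda>i. \<bar>d i\<bar> powr q)"
    using summable_iff_shift[of "\<lambda>i. \<bar>d i\<bar> powr q" n] by simp
  have "(\<Sum>i<n. \<bar>d i\<bar> powr q) \<le> (\<Sum>i<n. \<delta> powr q)"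
    using d_head q by (intro sum_mono powr_mono2) (auto intro: less_imp_le)
  also have "\<dots> = t / 2 * (real n / (real n + 1))"
    unfolding \<delta>_def using \<open>0 < t\<close> q by (simp add: powr_powr field_simps)
  also have "\<dots> \<le> t / 2"
    using \<open>0 < t\<close> by (intro mult_left_le) auto
  finally have "(\<Sum>i. \<bar>d i\<bar> powr q) < t"
    using suminf_split_initial_segment[OF sd, of n] tail unfolding d_tail by simp
  then have "(\<Sum>i. \<bar>d i\<bar> powr q) powr (1 / q) < t powr (1 / q)"
    using sd q by (intro powr_less_mono2) (auto intro: suminf_nonneg)
  also have "t powr (1 / q) = e"
    unfolding t_def using e q by (simp add: powr_powr)
  finally show ?thesis
    unfolding lq_norm_def d_def by blast
qed

definition incl_proj :: "nat \<Rightarrow> (nat \<Rightarrow> real) \<Rightarrow> nat \<times> nat \<Rightarrow> real"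
  where "incl_proj n y = incl_n n (proj_n n y)"

lemma incl_proj_apply: "incl_proj n y (m, i) = (if m = n \<and> i < n then y i else 0)"
  by (simp add: incl_proj_def incl_n_def proj_n_def)

lemma incl_proj_zero: "incl_proj n (\<lambda>_. 0) = (\<lambda>_. 0)"
  by (auto simp: fun_eq_iff incl_proj_apply)

lemma incl_proj_in_Xsp: "incl_proj n y \<in> Xsp p q"
  unfolding Xsp_def mem_Collect_eq
proof (intro conjI allI impI)
  show "summable (\<lambda>m. ((\<Sum>i<m. \<bar>incl_proj n y (m, i)\<bar> powr q) powr (1 / q)) powr p)"
    by (rule summable_finite[of "{n}"]) (auto simp: incl_proj_apply)
qed (simp add: incl_proj_apply)

lemma X_norm_incl_proj_le:
  assumes "0 < p" "0 < q" "y \<in> lq q"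
  shows "X_norm p q (incl_proj n y) \<le> lq_norm q y"
proof -
  have "(\<Sum>m. ((\<Sum>i<m. \<bar>incl_proj n y (m, i)\<bar> powr q) powr (1 / q)) powr p)
      = ((\<Sum>i<n. \<bar>y i\<bar> powr q) powr (1 / q)) powr p"
    by (subst suminf_finite[of "{n}"]) (auto simp: incl_proj_apply)
  then have "X_norm p q (incl_proj n y) = (\<Sum>i<n. \<bar>y i\<bar> powr q) powr (1 / q)"
    unfolding X_norm_def using assms(1) by (simp add: powr_powr)
  also have "\<dots> \<le> (\<Sum>i. \<bar>y i\<bar> powr q) powr (1 / q)"
    using assms lq_def by (intro powr_mono2 sum_le_suminf) (auto intro: sum_nonneg)
  finally show ?thesis
    unfolding lq_norm_def .
qed

lemma linear_contraction_incl_proj: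
  assumes "0 < p" "1 \<le> q"
  shows "linear_contraction (lq q) (lq_norm q) (Xsp p q) (X_norm p q) (incl_proj n)"
proof (intro linear_contraction.intro linear_contraction_axioms.intro quasinormed_space_lq assms(2))
  show "incl_proj n (vadd x y) = vadd (incl_proj n x) (incl_proj n y)" for x y
    by (auto simp: fun_eq_iff vadd_def incl_proj_apply)
  show "incl_proj n (vscale c x) = vscale c (incl_proj n x)" for c x
    by (auto simp: fun_eq_iff vscale_def incl_proj_apply)
  show "0 \<le> X_norm p q w" for w
    by (simp add: X_norm_def)
qed (use assms X_norm_incl_proj_le incl_proj_in_Xsp in auto)

lemma hoelder_jet_family_restrictions:
  assumes "0 < p" "1 \<le> q" and jet: "hoelder_jet_on (Xsp p q) (X_norm p q) k \<alpha> M D"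
    and "0 < \<alpha>" "\<alpha> \<le> 1" "0 \<le> M"
  shows "\<exists>c. hoelder_jet_family (lq q) (lq_norm q) k \<alpha> M c
    (\<lambda>n j y hs. D j (incl_proj n y) (map (incl_proj n) hs))"
proof -
  define c where "c = (\<Sum>j\<le>k. \<bar>mnorm (Xsp p q) (X_norm p q) j (D j (\<lambda>_. 0))\<bar>)"
  have "hoelder_jet_family (lq q) (lq_norm q) k \<alpha> M c (\<lambda>n j y hs. D j (incl_proj n y) (map (incl_proj n) hs))"
  proof (intro hoelder_jet_family.intro hoelder_jet_family_axioms.intro quasinormed_space_lq assms(2))
    fix n
    interpret linear_contraction "lq q" "lq_norm q" "Xsp p q" "X_norm p q" "incl_proj n"
      using assms(1,2) by (rule linear_contraction_incl_proj)
    show "hoelder_jet (lq q) (lq_norm q) k \<alpha> M (\<lambda>j y hs. D j (incl_proj n y) (map (incl_proj n) hs))"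
      using assms by (intro hoelder_jet.intro hoelder_jet_axioms.intro quasinormed_space_lq hoelder_jet_on_comp) auto
  next
    fix n j assume "j \<le> k"
    interpret linear_contraction "lq q" "lq_norm q" "Xsp p q" "X_norm p q" "incl_proj n"
      using assms(1,2) by (rule linear_contraction_incl_proj)
    have "bounded_multilinear_on (Xsp p q) (X_norm p q) j (D j (\<lambda>_. 0))"
      using jet \<open>j \<le> k\<close> incl_proj_in_Xsp[of n "\<lambda>_. 0" p q] unfolding hoelder_jet_on_def incl_proj_zero by auto
    then have "mnorm (lq q) (lq_norm q) j (\<lambda>hs. D j (incl_proj n (\<lambda>_. 0)) (map (incl_proj n) hs))
        \<le> mnorm (Xsp p q) (X_norm p q) j (D j (\<lambda>_. 0))"
      unfolding incl_proj_zero by (rule mnorm_comp_le)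
    also have "\<dots> \<le> c"
      using abs_ge_self member_le_sum[of j "{..k}" "\<lambda>j. \<bar>mnorm (Xsp p q) (X_norm p q) j (D j (\<lambda>_. 0))\<bar>"] \<open>j \<le> k\<close>
      unfolding c_def by (simp add: order_trans)
    finally show "mnorm (lq q) (lq_norm q) j (\<lambda>hs. D j (incl_proj n (\<lambda>_. 0)) (map (incl_proj n) hs)) \<le> c" .
  qed
  then show ?thesis
    by blast
qed

theorem proposition3p4:
  fixes p q r :: real
    and F :: "(nat \<times> nat \<Rightarrow> real) \<Rightarrow> real"
  assumes "1 < p" and "1 < q" and "1 < r"
    and "uniformly_H_smooth (Xsp p q) (X_norm p q) r F"
  shows "\<exists>(s :: nat \<Rightarrow> nat) (Fstar :: (nat \<Rightarrow> real) \<Rightarrow> real).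
           strict_mono s
         \<and> (\<forall>y\<in>lq q. (\<lambda>j. F (incl_n (s j) (proj_n (s j) y))) \<longlonglongrightarrow> Fstar y)
         \<and> uniformly_H_smooth (lq q) (lq_norm q) r Fstar"
proof -
  define k where "k = nat (\<lceil>r\<rceil> - 1)"
  define \<alpha> where "\<alpha> = r - real k"
  obtain D M where "0 < M" and D0: "\<forall>y\<in>Xsp p q. D 0 y [] = F y"
    and jet: "hoelder_jet_on (Xsp p q) (X_norm p q) k \<alpha> M D"
    using assms(4) unfolding uniformly_H_smooth_iff k_def \<alpha>_def by blast
  have "0 < \<alpha>" "\<alpha> \<le> 1"
    unfolding \<alpha>_def k_def using assms(3) ceiling_correct[of r] le_of_int_ceiling[of r] by linarith+
  then obtain c where
    "hoelder_jet_family (lq q) (lq_norm q) k \<alpha> M c (\<lambda>n j y hs. D j (incl_proj n y) (map (incl_proj n) hs))"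
    using hoelder_jet_family_restrictions[of p q k \<alpha> M D] assms(1,2) jet \<open>0 < M\<close> by auto
  then interpret hoelder_jet_family "lq q" "lq_norm q" k \<alpha> M c
    "\<lambda>n j y hs. D j (incl_proj n y) (map (incl_proj n) hs)" .
  obtain s D' where "strict_mono s" and lim: "\<And>j y hs. j \<le> k \<Longrightarrow> y \<in> lq q \<Longrightarrow> length hs = j \<Longrightarrow>
      set hs \<subseteq> lq q \<Longrightarrow> (\<lambda>m. D j (incl_proj (s m) y) (map (incl_proj (s m)) hs)) \<longlonglongrightarrow> D' j y hs"
    and "hoelder_jet_on (lq q) (lq_norm q) k \<alpha> M D'"
  proof (rule convergent_subsequence[of "range rat_seq"])
    show "\<exists>y'\<in>range rat_seq. lq_norm q (vdiff y y') < e" if "y \<in> lq q" "0 < e" for y e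
      using lq_rat_seq_dense[of q y e] that assms(2) by auto
  qed (use rat_seq_in_lq that in auto)
  moreover have "(\<lambda>m. F (incl_n (s m) (proj_n (s m) y))) \<longlonglongrightarrow> D' 0 y []" if "y \<in> lq q" for y
    using lim[of 0 y "[]"] that D0 incl_proj_in_Xsp unfolding incl_proj_def by simp
  ultimately show ?thesis
    unfolding uniformly_H_smooth_iff k_def[symmetric] \<alpha>_def[symmetric] using \<open>0 < M\<close>
    by (intro exI[of _ s] exI[of _ "\<lambda>y. D' 0 y []"]) blast
qed

end
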